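(* Let $\Gamma$ be a subalgebra of the $\Bbbk$-algebra $A$ and let $\sim$ be the equivalence relation on $\mathrm{cfs}(\Gamma)$ generated by $\mathfrak m\sim\mathfrak n$ whenever $\mathrm{Ext}^1_\Gamma(S_{\mathfrak m},S_{\mathfrak n})\ne0$. If $\Gamma$ is quasinoetherian with respect to $\sim$ and $\Gamma$ is quasicentral in $A$, then $\Gamma$ is a Harish-Chandra block subalgebra of $A$ with respect to $\sim$.
   Context: $\mathrm{cfs}(\Gamma)$: maximal two-sided ideals $\mathfrak m$ of $\Gamma$ with $\dim\Gamma/\mathfrak m<\infty$; $S_{\mathfrak m}$ the unique simple $\Gamma/\mathfrak m$-module. For a class $B$, $\mathcal W(B)=\{\mathfrak m_1\cdots\mathfrak m_k:k\ge0,\mathfrak m_i\in B\}$; for a $\Gamma$-module $V$, $V(B)=\{v:\mathfrak mv=0$ for some $\mathfrak m\in\mathcal W(B)\}$; $V$ is a block module if $V=\bigoplus_BV(B)$. $\Gamma$ is quasinoetherian w.r.t. $\sim$ if $\Gamma/\mathfrak m$ is finite-dimensional for every class $B$ and $\mathfrak m\in\mathcal W(B)$. $\Gamma$ is quasicentral in $A$ if $\Gamma a\Gamma$ is finitely generated as a left and as a right $\Gamma$-module for every $a\in A$. $\Gamma$ is a Harish-Chandra block subalgebra of $A$ w.r.t. $\sim$ if $A/A\mathfrak m$ is a block module over $\Gamma$ for every $B$ and $\mathfrak m\in\mathcal W(B)$. *)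

theory Defs
  imports Complex_Main
begin

section \<open>Ambient k-algebra A (= UNIV of type 'a) and subalgebra Gamma\<close>

definition kalg :: "('k::field \<Rightarrow> 'a::ring_1 \<Rightarrow> 'a) \<Rightarrow> bool" where
  "kalg smul \<longleftrightarrow> vector_space smul \<and>
     (\<forall>c x y. smul c (x * y) = smul c x * y \<and> smul c (x * y) = x * smul c y)"

definition subalg :: "('k::field \<Rightarrow> 'a::ring_1 \<Rightarrow> 'a) \<Rightarrow> 'a set \<Rightarrow> bool" where
  "subalg smul G \<longleftrightarrow> 0 \<in> G \<and> 1 \<in> G \<and> (\<forall>x\<in>G. \<forall>y\<in>G. x + y \<in> G \<and> x * y \<in> G)
     \<and> (\<forall>x\<in>G. - x \<in> G) \<and> (\<forall>c. \<forall>x\<in>G. smul c x \<in> G)"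

definition ideal2 :: "'a::ring_1 set \<Rightarrow> 'a set \<Rightarrow> bool" where
  "ideal2 G I \<longleftrightarrow> I \<subseteq> G \<and> 0 \<in> I \<and> (\<forall>x\<in>I. \<forall>y\<in>I. x + y \<in> I) \<and> (\<forall>x\<in>I. - x \<in> I)
     \<and> (\<forall>g\<in>G. \<forall>x\<in>I. g * x \<in> I \<and> x * g \<in> I)"

definition findim_quot :: "('k::field \<Rightarrow> 'a::ring_1 \<Rightarrow> 'a) \<Rightarrow> 'a set \<Rightarrow> 'a set \<Rightarrow> bool" where
  "findim_quot smul G I \<longleftrightarrow>
     (\<exists>F. finite F \<and> F \<subseteq> G \<and> (\<forall>g\<in>G. \<exists>f\<in>module.span smul F. g - f \<in> I))"

definition cfs :: "('k::field \<Rightarrow> 'a::ring_1 \<Rightarrow> 'a) \<Rightarrow> 'a set \<Rightarrow> 'a set set" where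
  "cfs smul G = {m. ideal2 G m \<and> m \<noteq> G \<and> (\<forall>I. ideal2 G I \<and> m \<subseteq> I \<longrightarrow> I = m \<or> I = G)
                  \<and> findim_quot smul G m}"

section \<open>Finite-dimensional Gamma-modules as matrix representations on k^d\<close>

definition rep :: "('k::field \<Rightarrow> 'a::ring_1 \<Rightarrow> 'a) \<Rightarrow> 'a set \<Rightarrow> nat \<Rightarrow> ('a \<Rightarrow> nat \<Rightarrow> nat \<Rightarrow> 'k) \<Rightarrow> bool" where
  "rep smul G d \<rho> \<longleftrightarrow>
     (\<forall>i<d. \<forall>j<d. \<rho> 1 i j = (if i = j then 1 else 0)) \<and>
     (\<forall>x\<in>G. \<forall>y\<in>G. \<forall>i<d. \<forall>j<d. \<rho> (x + y) i j = \<rho> x i j + \<rho> y i j \<and>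
                                 \<rho> (x * y) i j = (\<Sum>l<d. \<rho> x i l * \<rho> y l j)) \<and>
     (\<forall>c. \<forall>x\<in>G. \<forall>i<d. \<forall>j<d. \<rho> (smul c x) i j = c * \<rho> x i j)"

definition vecs :: "nat \<Rightarrow> (nat \<Rightarrow> 'k::field) set" where
  "vecs d = {v. \<forall>i\<ge>d. v i = 0}"

definition mapply :: "nat \<Rightarrow> (nat \<Rightarrow> nat \<Rightarrow> 'k::field) \<Rightarrow> (nat \<Rightarrow> 'k) \<Rightarrow> (nat \<Rightarrow> 'k)" where
  "mapply d M v = (\<lambda>i. if i < d then (\<Sum>j<d. M i j * v j) else 0)"

definition simple_rep :: "('k::field \<Rightarrow> 'a::ring_1 \<Rightarrow> 'a) \<Rightarrow> 'a set \<Rightarrow> nat \<Rightarrow> ('a \<Rightarrow> nat \<Rightarrow> nat \<Rightarrow> 'k) \<Rightarrow> bool" where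
  "simple_rep smul G d \<rho> \<longleftrightarrow> rep smul G d \<rho> \<and> 0 < d \<and>
     (\<forall>U. U \<subseteq> vecs d \<and> (\<lambda>_. 0) \<in> U \<and> (\<forall>u\<in>U. \<forall>v\<in>U. (\<lambda>i. u i + v i) \<in> U)
          \<and> (\<forall>c. \<forall>u\<in>U. (\<lambda>i. c * u i) \<in> U) \<and> (\<forall>g\<in>G. \<forall>u\<in>U. mapply d (\<rho> g) u \<in> U)
        \<longrightarrow> U = {\<lambda>_. 0} \<or> U = vecs d)"

text \<open>A realization of the simple Gamma/m-module S_m (unique up to isomorphism).\<close>
definition simple_quot_rep :: "('k::field \<Rightarrow> 'a::ring_1 \<Rightarrow> 'a) \<Rightarrow> 'a set \<Rightarrow> 'a set \<Rightarrow> nat \<Rightarrow> ('a \<Rightarrow> nat \<Rightarrow> nat \<Rightarrow> 'k) \<Rightarrow> bool" where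
  "simple_quot_rep smul G m d \<rho> \<longleftrightarrow> simple_rep smul G d \<rho> \<and> (\<forall>x\<in>m. \<forall>i<d. \<forall>j<d. \<rho> x i j = 0)"

text \<open>There is a non-split extension 0 -> T -> E -> S -> 0 (E = T (+) S as vector space,
  inclusion into the first dT coordinates, projection onto the last dS coordinates,
  both Gamma-linear; non-split = no Gamma-linear section of the projection).\<close>
definition ext_nonsplit :: "('k::field \<Rightarrow> 'a::ring_1 \<Rightarrow> 'a) \<Rightarrow> 'a set \<Rightarrow> nat \<Rightarrow> ('a \<Rightarrow> nat \<Rightarrow> nat \<Rightarrow> 'k)
    \<Rightarrow> nat \<Rightarrow> ('a \<Rightarrow> nat \<Rightarrow> nat \<Rightarrow> 'k) \<Rightarrow> bool" where
  "ext_nonsplit smul G dT \<rho>T dS \<rho>S \<longleftrightarrow>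
    (\<exists>\<rho>E. rep smul G (dT + dS) \<rho>E \<and>
       (\<forall>g\<in>G. (\<forall>i<dT. \<forall>j<dT. \<rho>E g i j = \<rho>T g i j) \<and>
               (\<forall>i<dS. \<forall>j<dT. \<rho>E g (dT + i) j = 0) \<and>
               (\<forall>i<dS. \<forall>j<dS. \<rho>E g (dT + i) (dT + j) = \<rho>S g i j)) \<and>
       \<not> (\<exists>\<sigma>. (\<forall>i<dS. \<forall>j<dS. \<sigma> (dT + i) j = (if i = j then 1 else 0)) \<and>
              (\<forall>g\<in>G. \<forall>i<dT + dS. \<forall>j<dS.
                  (\<Sum>l<dT + dS. \<rho>E g i l * \<sigma> l j) = (\<Sum>l<dS. \<sigma> i l * \<rho>S g l j))))"

text \<open>Ext^1_Gamma(S_m, S_n) \<noteq> 0.\<close>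
definition ext1_nz :: "('k::field \<Rightarrow> 'a::ring_1 \<Rightarrow> 'a) \<Rightarrow> 'a set \<Rightarrow> 'a set \<Rightarrow> 'a set \<Rightarrow> bool" where
  "ext1_nz smul G m n \<longleftrightarrow>
    (\<exists>dS \<rho>S dT \<rho>T. simple_quot_rep smul G m dS \<rho>S \<and> simple_quot_rep smul G n dT \<rho>T \<and>
        ext_nonsplit smul G dT \<rho>T dS \<rho>S)"

definition sim_rel :: "('k::field \<Rightarrow> 'a::ring_1 \<Rightarrow> 'a) \<Rightarrow> 'a set \<Rightarrow> ('a set \<times> 'a set) set" where
  "sim_rel smul G = {(m, n). m \<in> cfs smul G \<and> n \<in> cfs smul G \<and>
     (\<lambda>x y. x \<in> cfs smul G \<and> y \<in> cfs smul G \<and> (ext1_nz smul G x y \<or> ext1_nz smul G y x))\<^sup>*\<^sup>* m n}"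

definition ideal_prod :: "'a::ring_1 set \<Rightarrow> 'a set \<Rightarrow> 'a set" where
  "ideal_prod I J = {\<Sum>i<n. x i * y i | (n::nat) x y. \<forall>i<n. x i \<in> I \<and> y i \<in> J}"

inductive_set Wset :: "'a::ring_1 set \<Rightarrow> 'a set set \<Rightarrow> 'a set set" for G B where
  Wnil: "G \<in> Wset G B"
| Wcons: "I \<in> Wset G B \<Longrightarrow> n \<in> B \<Longrightarrow> ideal_prod I n \<in> Wset G B"

definition quasinoetherian :: "('k::field \<Rightarrow> 'a::ring_1 \<Rightarrow> 'a) \<Rightarrow> 'a set \<Rightarrow> ('a set \<times> 'a set) set \<Rightarrow> bool" where
  "quasinoetherian smul G R \<longleftrightarrow> (\<forall>B\<in>cfs smul G // R. \<forall>m\<in>Wset G B. findim_quot smul G m)"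

definition bimod :: "'a::ring_1 set \<Rightarrow> 'a \<Rightarrow> 'a set" where
  "bimod G a = {\<Sum>i<n. g i * a * h i | (n::nat) g h. \<forall>i<n. g i \<in> G \<and> h i \<in> G}"

definition quasicentral :: "'a::ring_1 set \<Rightarrow> bool" where
  "quasicentral G \<longleftrightarrow> (\<forall>a.
     (\<exists>F. finite F \<and> F \<subseteq> bimod G a \<and> bimod G a \<subseteq> {\<Sum>f\<in>F. c f * f | c. \<forall>f\<in>F. c f \<in> G}) \<and>
     (\<exists>F. finite F \<and> F \<subseteq> bimod G a \<and> bimod G a \<subseteq> {\<Sum>f\<in>F. f * c f | c. \<forall>f\<in>F. c f \<in> G}))"

definition left_gen :: "'a::ring_1 set \<Rightarrow> 'a set" where
  "left_gen m = {\<Sum>i<n. a i * x i | (n::nat) a x. \<forall>i<n. x i \<in> m}"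

text \<open>Preimage in A of V(B) for V = A / L.\<close>
definition vlift :: "'a::ring_1 set \<Rightarrow> 'a set \<Rightarrow> 'a set set \<Rightarrow> 'a set" where
  "vlift G L B = {a. \<exists>n\<in>Wset G B. \<forall>x\<in>n. x * a \<in> L}"

text \<open>A / L is the (internal) direct sum of its subspaces V(B), B ranging over the classes Cls.\<close>
definition block_quot :: "'a::ring_1 set \<Rightarrow> 'a set set set \<Rightarrow> 'a set \<Rightarrow> bool" where
  "block_quot G Cls L \<longleftrightarrow>
     (\<forall>a. \<exists>C f. finite C \<and> C \<subseteq> Cls \<and> (\<forall>B\<in>C. f B \<in> vlift G L B) \<and> a - (\<Sum>B\<in>C. f B) \<in> L) \<and>
     (\<forall>C f. finite C \<and> C \<subseteq> Cls \<and> (\<forall>B\<in>C. f B \<in> vlift G L B) \<and> (\<Sum>B\<in>C. f B) \<in> L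
        \<longrightarrow> (\<forall>B\<in>C. f B \<in> L))"

definition HC_block :: "('k::field \<Rightarrow> 'a::ring_1 \<Rightarrow> 'a) \<Rightarrow> 'a set \<Rightarrow> ('a set \<times> 'a set) set \<Rightarrow> bool" where
  "HC_block smul G R \<longleftrightarrow>
     (\<forall>B\<in>cfs smul G // R. \<forall>m\<in>Wset G B. block_quot G (cfs smul G // R) (left_gen m))"

end

theory Submission
  imports Defs "HOL-Library.Set_Algebras"
begin

text \<open>
  Fix a class \<open>B\<close>, an ideal \<open>m \<in> W(B)\<close> and put \<open>L = A m\<close>. For \<open>a \<in> A\<close>, quasicentrality and
  \<open>dim \<Gamma> / m < \<infinity>\<close> make \<open>(\<Gamma> a + L) / L\<close> finite dimensional, so it suffices that every finite
  dimensional subquotient \<open>U / W\<close> of \<open>A\<close> is the sum of its parts \<open>(U / W)(B)\<close>. Induct on the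
  dimension: choose a simple submodule \<open>U1 / W\<close>; by a density argument its annihilator \<open>M\<close> is a
  maximal ideal, of finite codimension. Decompose \<open>U / U1\<close> and lift each component of a class
  \<open>B \<noteq> [M]\<close> to \<open>U / W\<close> by splitting the extension of \<open>U1 / W\<close> by the module the component
  generates: all its simple subquotients have annihilators in \<open>B\<close>, and \<open>Ext\<^sup>1\<close> between simple
  modules of different classes vanishes. What is left lies in \<open>U1 / W\<close>, which belongs to \<open>[M]\<close>.
  The sum is direct because \<open>W(B)\<close> and \<open>W(B')\<close> are comaximal for \<open>B \<noteq> B'\<close>: the members of
  \<open>cfs(\<Gamma>)\<close> are prime, so one containing both would lie in both classes.
\<close>

lemma set_plus_iff_diff:
  fixes x :: "'a::ab_group_add"
  shows "x \<in> S + W \<longleftrightarrow> (\<exists>s\<in>S. x - s \<in> W)"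
proof
  assume "x \<in> S + W"
  then obtain s w where "x = s + w" "s \<in> S" "w \<in> W" by (rule set_plus_elim)
  then show "\<exists>s\<in>S. x - s \<in> W" by (intro bexI[of _ s]) simp_all
next
  assume "\<exists>s\<in>S. x - s \<in> W"
  then obtain s where "s \<in> S" "x - s \<in> W" by blast
  then have "s + (x - s) \<in> S + W" by blast
  then show "x \<in> S + W" by simp
qed

lemma set_plus_diffI: "s \<in> S \<Longrightarrow> x - s \<in> W \<Longrightarrow> x \<in> S + W"
  for x :: "'a::ab_group_add"
  unfolding set_plus_iff_diff by blast

lemma set_plus_diffE:
  fixes x :: "'a::ab_group_add"
  assumes "x \<in> S + W" obtains s where "s \<in> S" "x - s \<in> W"
  using assms unfolding set_plus_iff_diff by blast

lemma sum_lessThan_append: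
  fixes a b :: "nat \<Rightarrow> 'b::comm_monoid_add"
  shows "(\<Sum>i<p+q. if i < p then a i else b (i - p)) = (\<Sum>i<p. a i) + (\<Sum>i<q. b i)"
proof (induction q)
  case 0
  have "(\<Sum>i<p. if i < p then a i else b (i - p)) = (\<Sum>i<p. a i)"
    by (intro sum.cong) auto
  then show ?case by simp
next
  case (Suc q)
  then show ?case by (simp add: add.assoc)
qed

lemma sum_lessThan_append_mult:
  fixes a b c d :: "nat \<Rightarrow> 'b::semiring_0"
  shows "(\<Sum>i<p+q. (if i < p then a i else b (i - p)) * (if i < p then c i else d (i - p)))
    = (\<Sum>i<p. a i * c i) + (\<Sum>i<q. b i * d i)"
  by (subst sum_lessThan_append[symmetric]) (intro sum.cong; simp)

lemma ideal_prod_mem: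
  "z \<in> ideal_prod I J \<longleftrightarrow> (\<exists>(n::nat) x y. z = (\<Sum>i<n. x i * y i) \<and> (\<forall>i<n. x i \<in> I \<and> y i \<in> J))"
  unfolding ideal_prod_def by blast

lemma zero_in_ideal_prod: "0 \<in> ideal_prod I J"
  unfolding ideal_prod_mem by (intro exI[of _ 0]) simp

lemma mult_in_ideal_prod: "x \<in> I \<Longrightarrow> y \<in> J \<Longrightarrow> x * y \<in> ideal_prod I J"
  unfolding ideal_prod_mem by (intro exI[of _ 1] exI[of _ "\<lambda>_. x"] exI[of _ "\<lambda>_. y"]) auto

lemma ideal_prod_add:
  assumes "u \<in> ideal_prod I J" and "v \<in> ideal_prod I J"
  shows "u + v \<in> ideal_prod I J"
proof -
  obtain x1 y1 and n1 :: nat where u: "u = (\<Sum>i<n1. x1 i * y1 i)" "\<forall>i<n1. x1 i \<in> I \<and> y1 i \<in> J"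
    using assms(1) unfolding ideal_prod_mem by blast
  obtain x2 y2 and n2 :: nat where v: "v = (\<Sum>i<n2. x2 i * y2 i)" "\<forall>i<n2. x2 i \<in> I \<and> y2 i \<in> J"
    using assms(2) unfolding ideal_prod_mem by blast
  define x where "x i = (if i < n1 then x1 i else x2 (i - n1))" for i
  define y where "y i = (if i < n1 then y1 i else y2 (i - n1))" for i
  have "u + v = (\<Sum>i<n1+n2. x i * y i)"
    unfolding u v x_def y_def by (rule sum_lessThan_append_mult[symmetric])
  moreover have "\<forall>i<n1+n2. x i \<in> I \<and> y i \<in> J" using u(2) v(2) unfolding x_def y_def by auto
  ultimately show ?thesis unfolding ideal_prod_mem by blast
qed

lemma ideal_prod_sum:
  "finite S \<Longrightarrow> (\<And>i. i \<in> S \<Longrightarrow> f i \<in> ideal_prod I J) \<Longrightarrow> sum f S \<in> ideal_prod I J"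
  by (induction S rule: finite_induct) (auto intro: zero_in_ideal_prod ideal_prod_add)

lemma ideal_prod_mult_left:
  assumes "\<And>x. x \<in> I \<Longrightarrow> g * x \<in> I" and "z \<in> ideal_prod I J"
  shows "g * z \<in> ideal_prod I J"
proof -
  obtain x y and n :: nat where z: "z = (\<Sum>i<n. x i * y i)" "\<forall>i<n. x i \<in> I \<and> y i \<in> J"
    using assms(2) unfolding ideal_prod_mem by blast
  have "g * z = (\<Sum>i<n. (g * x i) * y i)" unfolding z by (simp add: sum_distrib_left mult.assoc)
  then show ?thesis using z(2) assms(1) unfolding ideal_prod_mem
    by (intro exI[of _ n] exI[of _ "\<lambda>i. g * x i"] exI[of _ y]) simp
qed

lemma ideal_prod_mult_right:
  assumes "\<And>y. y \<in> J \<Longrightarrow> y * g \<in> J" and "z \<in> ideal_prod I J"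
  shows "z * g \<in> ideal_prod I J"
proof -
  obtain x y and n :: nat where z: "z = (\<Sum>i<n. x i * y i)" "\<forall>i<n. x i \<in> I \<and> y i \<in> J"
    using assms(2) unfolding ideal_prod_mem by blast
  have "z * g = (\<Sum>i<n. x i * (y i * g))" unfolding z by (simp add: sum_distrib_right mult.assoc)
  then show ?thesis using z(2) assms(1) unfolding ideal_prod_mem
    by (intro exI[of _ n] exI[of _ x] exI[of _ "\<lambda>i. y i * g"]) simp
qed

lemma ideal_prod_uminus:
  "(\<And>x. x \<in> I \<Longrightarrow> - x \<in> I) \<Longrightarrow> z \<in> ideal_prod I J \<Longrightarrow> - z \<in> ideal_prod I J"
  using ideal_prod_mult_left[of I "- 1" z J] by simp

lemma ideal_prod_mono: "I \<subseteq> I' \<Longrightarrow> J \<subseteq> J' \<Longrightarrow> ideal_prod I J \<subseteq> ideal_prod I' J'"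
  unfolding ideal_prod_def by blast

lemma ideal_prod_assoc_subset: "ideal_prod (ideal_prod A B) C \<subseteq> ideal_prod A (ideal_prod B C)"
proof
  fix z assume "z \<in> ideal_prod (ideal_prod A B) C"
  then obtain x c and n :: nat where z: "z = (\<Sum>i<n. x i * c i)" "\<forall>i<n. x i \<in> ideal_prod A B \<and> c i \<in> C"
    unfolding ideal_prod_mem by blast
  have "x i * c i \<in> ideal_prod A (ideal_prod B C)" if i: "i < n" for i
  proof -
    obtain a b and k :: nat where xi: "x i = (\<Sum>l<k. a l * b l)" "\<forall>l<k. a l \<in> A \<and> b l \<in> B"
      using z(2) i unfolding ideal_prod_mem by blast
    have "x i * c i = (\<Sum>l<k. a l * (b l * c i))" unfolding xi(1) by (simp add: sum_distrib_right mult.assoc)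
    also have "\<dots> \<in> ideal_prod A (ideal_prod B C)"
      using xi(2) z(2) i by (intro ideal_prod_sum mult_in_ideal_prod) auto
    finally show ?thesis .
  qed
  then show "z \<in> ideal_prod A (ideal_prod B C)" unfolding z(1) by (intro ideal_prod_sum) auto
qed

lemma left_gen_eq_ideal_prod: "left_gen m = ideal_prod UNIV m"
  unfolding left_gen_def ideal_prod_def by simp

definition left_ideal :: "'a::ring_1 set \<Rightarrow> bool" where
  "left_ideal L \<longleftrightarrow> 0 \<in> L \<and> (\<forall>x\<in>L. \<forall>y\<in>L. x + y \<in> L) \<and> (\<forall>a. \<forall>x\<in>L. a * x \<in> L)"

lemma left_ideal_left_gen: "left_ideal (left_gen m)"
  unfolding left_ideal_def left_gen_eq_ideal_prod
proof (intro conjI ballI allI)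
  show "0 \<in> ideal_prod UNIV m" by (rule zero_in_ideal_prod)
  show "x + y \<in> ideal_prod UNIV m" if "x \<in> ideal_prod UNIV m" "y \<in> ideal_prod UNIV m" for x y
    using that by (rule ideal_prod_add)
  show "a * x \<in> ideal_prod UNIV m" if "x \<in> ideal_prod UNIV m" for a x
    using that by (intro ideal_prod_mult_left) auto
qed

lemma
  assumes "ideal2 G I"
  shows ideal2_subset: "I \<subseteq> G"
    and ideal2_zero: "0 \<in> I"
    and ideal2_add: "x \<in> I \<Longrightarrow> y \<in> I \<Longrightarrow> x + y \<in> I"
    and ideal2_uminus: "x \<in> I \<Longrightarrow> - x \<in> I"
    and ideal2_mult_left: "g \<in> G \<Longrightarrow> x \<in> I \<Longrightarrow> g * x \<in> I"
    and ideal2_mult_right: "g \<in> G \<Longrightarrow> x \<in> I \<Longrightarrow> x * g \<in> I"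
  using assms unfolding ideal2_def by blast+

lemma ideal2_sum: "ideal2 G I \<Longrightarrow> (\<And>i. i \<in> S \<Longrightarrow> f i \<in> I) \<Longrightarrow> sum f S \<in> I"
  by (induction S rule: infinite_finite_induct) (auto intro: ideal2_zero ideal2_add)

lemma ideal2_Int: "ideal2 G I \<Longrightarrow> ideal2 G J \<Longrightarrow> ideal2 G (I \<inter> J)"
  unfolding ideal2_def by blast

lemma ideal_prod_subset_left:
  assumes "ideal2 G I" and "J \<subseteq> G"
  shows "ideal_prod I J \<subseteq> I"
proof
  fix z assume "z \<in> ideal_prod I J"
  then obtain x y and n :: nat where z: "z = (\<Sum>i<n. x i * y i)" "\<forall>i<n. x i \<in> I \<and> y i \<in> J"
    unfolding ideal_prod_mem by blast
  show "z \<in> I" unfolding z(1) using z(2) assms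
    by (intro ideal2_sum[OF assms(1)] ideal2_mult_right[OF assms(1)]) auto
qed

lemma ideal_prod_subset_right:
  assumes "I \<subseteq> G" and "ideal2 G J"
  shows "ideal_prod I J \<subseteq> J"
proof
  fix z assume "z \<in> ideal_prod I J"
  then obtain x y and n :: nat where z: "z = (\<Sum>i<n. x i * y i)" "\<forall>i<n. x i \<in> I \<and> y i \<in> J"
    unfolding ideal_prod_mem by blast
  show "z \<in> J" unfolding z(1) using z(2) assms
    by (intro ideal2_sum[OF assms(2)] ideal2_mult_left[OF assms(2)]) auto
qed

lemma ideal2_ideal_prod:
  assumes I: "ideal2 G I" and J: "ideal2 G J"
  shows "ideal2 G (ideal_prod I J)"
proof -
  have "ideal_prod I J \<subseteq> G"
    using ideal_prod_subset_right[OF ideal2_subset[OF I] J] ideal2_subset[OF J] by blast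
  moreover have "- x \<in> ideal_prod I J" if "x \<in> ideal_prod I J" for x
    using ideal2_uminus[OF I] that by (rule ideal_prod_uminus)
  moreover have "g * x \<in> ideal_prod I J" "x * g \<in> ideal_prod I J"
    if g: "g \<in> G" and x: "x \<in> ideal_prod I J" for g x
    using ideal_prod_mult_left[OF ideal2_mult_left[OF I g] x]
      ideal_prod_mult_right[OF ideal2_mult_right[OF J g] x] by simp_all
  ultimately show ?thesis
    unfolding ideal2_def using zero_in_ideal_prod[of I J] ideal_prod_add[of _ I J] by (intro conjI ballI) auto
qed

lemma findim_quot_mono:
  assumes "findim_quot smul G I" and "I \<subseteq> J"
  shows "findim_quot smul G J"
proof -
  obtain F where F: "finite F" "F \<subseteq> G" "\<forall>g\<in>G. \<exists>f\<in>module.span smul F. g - f \<in> I"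
    using assms(1) unfolding findim_quot_def by blast
  have "\<forall>g\<in>G. \<exists>f\<in>module.span smul F. g - f \<in> J"
    using F(3) assms(2) by fast
  then show ?thesis unfolding findim_quot_def using F(1,2) by fast
qed

section \<open>Linear algebra modulo a subspace\<close>

definition lincomb :: "('a::field \<Rightarrow> 'b::ab_group_add \<Rightarrow> 'b) \<Rightarrow> nat \<Rightarrow> (nat \<Rightarrow> 'a) \<Rightarrow> (nat \<Rightarrow> 'b) \<Rightarrow> 'b"
  where "lincomb scale d c e = (\<Sum>j<d. scale (c j) (e j))"

definition quot_basis ::
    "('a::field \<Rightarrow> 'b::ab_group_add \<Rightarrow> 'b) \<Rightarrow> 'b set \<Rightarrow> 'b set \<Rightarrow> nat \<Rightarrow> (nat \<Rightarrow> 'b) \<Rightarrow> bool"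
  where "quot_basis scale U W d e \<longleftrightarrow> (\<forall>j<d. e j \<in> U) \<and> (\<forall>u\<in>U. \<exists>c. u - lincomb scale d c e \<in> W) \<and>
     (\<forall>c. lincomb scale d c e \<in> W \<longrightarrow> (\<forall>j<d. c j = 0))"

definition coord ::
    "('a::field \<Rightarrow> 'b::ab_group_add \<Rightarrow> 'b) \<Rightarrow> 'b set \<Rightarrow> nat \<Rightarrow> (nat \<Rightarrow> 'b) \<Rightarrow> 'b \<Rightarrow> nat \<Rightarrow> 'a"
  where "coord scale W d e u = (SOME c. (\<forall>j. d \<le> j \<longrightarrow> c j = 0) \<and> u - lincomb scale d c e \<in> W)"

context vector_space
begin

lemma dim_strict_mono:
  assumes S: "subspace S" and ST: "S \<subseteq> T" "S \<noteq> T" and T: "T \<subseteq> span F" and F: "finite F"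
  shows "dim S < dim T"
proof -
  obtain B where B: "B \<subseteq> S" "independent B" "S \<subseteq> span B" "card B = dim S"
    by (rule basis_exists)
  have finB: "finite B" using independent_span_bound[OF F B(2)] B(1) ST T by auto
  obtain t where t: "t \<in> T" "t \<notin> S" using ST by auto
  have "span B \<subseteq> S" using B(1) S span_minimal by blast
  then have tB: "t \<notin> span B" using t by auto
  have ind: "independent (insert t B)" using independent_insertI[OF tB B(2)] .
  obtain A where A: "A \<subseteq> T" "independent A" "T \<subseteq> span A" "card A = dim T"
    by (rule basis_exists)
  have finA: "finite A" using independent_span_bound[OF F A(2)] A(1) T by auto
  have "insert t B \<subseteq> span A" using A(3) t(1) B(1) ST by auto
  then have "card (insert t B) \<le> card A" using independent_span_bound[OF finA ind] by auto
  moreover have "t \<notin> B" using tB span_base by metis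
  then have "card (insert t B) = card B + 1" using finB by simp
  ultimately show ?thesis using A(4) B(4) by simp
qed

lemma span_plus_within:
  assumes U: "subspace U" and WU: "W \<subseteq> U" and sp: "U \<subseteq> span F + W" and F: "finite F"
  shows "\<exists>F'. finite F' \<and> F' \<subseteq> U \<and> U \<subseteq> span F' + W"
proof -
  obtain B where B: "B \<subseteq> span F \<inter> U" "independent B" "span F \<inter> U \<subseteq> span B"
    by (rule basis_exists)
  have "finite B" using independent_span_bound[OF F B(2)] B(1) by auto
  moreover have "U \<subseteq> span B + W"
  proof
    fix x assume x: "x \<in> U"
    then obtain y where y: "y \<in> span F" "x - y \<in> W" using sp by (blast elim: set_plus_diffE)
    have "y \<in> U" using subspace_diff[OF U x, of "x - y"] y(2) WU by auto
    then have "y \<in> span B" using B(3) y(1) by auto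
    then show "x \<in> span B + W" using y(2) by (rule set_plus_diffI)
  qed
  ultimately show ?thesis using B(1) by blast
qed

lemma dim_span_Int_strict_mono:
  assumes Wa: "subspace Wa" and Wb: "subspace Wb" and ab: "Wa \<subseteq> Wb" "Wa \<noteq> Wb"
    and W: "W \<subseteq> Wa" and sp: "Wb \<subseteq> span F + W" and F: "finite F"
  shows "dim (span F \<inter> Wa) < dim (span F \<inter> Wb)"
proof (rule dim_strict_mono)
  show "span F \<inter> Wa \<noteq> span F \<inter> Wb"
  proof
    assume eq: "span F \<inter> Wa = span F \<inter> Wb"
    have "Wb \<subseteq> Wa"
    proof
      fix x assume x: "x \<in> Wb"
      then obtain y where y: "y \<in> span F" "x - y \<in> W" using sp by (blast elim: set_plus_diffE)
      have "y \<in> Wb" using subspace_diff[OF Wb x, of "x - y"] y(2) W ab(1) by auto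
      then have "y \<in> Wa" using eq y(1) by blast
      then have "(x - y) + y \<in> Wa" using subspace_add[OF Wa] y(2) W by blast
      then show "x \<in> Wa" by simp
    qed
    then show False using ab by blast
  qed
qed (use assms in \<open>auto intro: subspace_inter\<close>)

lemma dim_span_Int_mono:
  assumes "subspace Wa" and "Wa \<subseteq> Wb" and "finite F"
  shows "dim (span F \<inter> Wa) \<le> dim (span F \<inter> Wb)"
proof (cases "span F \<inter> Wa = span F \<inter> Wb")
  case False
  have "dim (span F \<inter> Wa) < dim (span F \<inter> Wb)"
    by (rule dim_strict_mono[OF subspace_inter[OF subspace_span assms(1)]])
      (use assms False in auto)
  then show ?thesis by simp
qed simp

lemma dim_span_Int_diff_less:
  assumes V: "subspace V" and V': "subspace V'" and VV': "V \<subseteq> V'" "V \<noteq> V'"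
    and V'X: "V' \<subseteq> X" and sp: "X \<subseteq> span F + V" and F: "finite F"
  shows "dim (span F \<inter> X) - dim (span F \<inter> V') < dim (span F \<inter> X) - dim (span F \<inter> V)"
proof -
  have "dim (span F \<inter> V) < dim (span F \<inter> V')"
    using dim_span_Int_strict_mono[OF V V' VV' order_refl _ F] V'X sp by blast
  moreover have "dim (span F \<inter> V') \<le> dim (span F \<inter> X)"
    using dim_span_Int_mono[OF V' V'X F] .
  ultimately show ?thesis by linarith
qed

lemma lincomb_add_coeffs: "lincomb scale d (\<lambda>j. a j + b j) e = lincomb scale d a e + lincomb scale d b e"
  unfolding lincomb_def by (simp add: scale_left_distrib sum.distrib)

lemma lincomb_diff_coeffs: "lincomb scale d (\<lambda>j. a j - b j) e = lincomb scale d a e - lincomb scale d b e"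
  unfolding lincomb_def by (simp add: scale_left_diff_distrib sum_subtractf)

lemma lincomb_diff_vectors: "lincomb scale d c (\<lambda>j. a j - b j) = lincomb scale d c a - lincomb scale d c b"
  unfolding lincomb_def by (simp add: scale_right_diff_distrib sum_subtractf)

lemma lincomb_scale: "k *s (lincomb scale d c e) = lincomb scale d (\<lambda>j. k * c j) e"
  unfolding lincomb_def by (simp add: scale_sum_right)

lemma lincomb_cong:
  "(\<And>j. j < d \<Longrightarrow> a j = b j) \<Longrightarrow> (\<And>j. j < d \<Longrightarrow> e j = f j) \<Longrightarrow> lincomb scale d a e = lincomb scale d b f"
  unfolding lincomb_def by (intro sum.cong) auto

lemma lincomb_zero_coeffs: "(\<And>j. j < d \<Longrightarrow> c j = 0) \<Longrightarrow> lincomb scale d c e = 0"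
  unfolding lincomb_def by (intro sum.neutral) simp

lemma lincomb_lincomb:
  "lincomb scale d b (\<lambda>l. lincomb scale d' (\<lambda>i. a i l) e) = lincomb scale d' (\<lambda>i. \<Sum>l<d. a i l * b l) e"
  unfolding lincomb_def
  by (simp add: scale_sum_right scale_sum_left sum.swap[of _ "{..<d}"] mult.commute)

lemma lincomb_unit: "j < d \<Longrightarrow> lincomb scale d (\<lambda>l. if l = j then 1 else 0) e = e j"
  unfolding lincomb_def by (simp add: if_distrib[of "\<lambda>c. c *s _"] sum.delta' cong: if_cong)

lemma lincomb_append:
  "lincomb scale (p + q) c (\<lambda>i. if i < p then t i else s (i - p)) = lincomb scale p c t + lincomb scale q (\<lambda>i. c (p + i)) s"
proof -
  have "lincomb scale (p + q) c (\<lambda>i. if i < p then t i else s (i - p))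
      = (\<Sum>i<p+q. if i < p then c i *s t i else c (p + (i - p)) *s s (i - p))"
    unfolding lincomb_def by (intro sum.cong) auto
  also have "\<dots> = lincomb scale p c t + lincomb scale q (\<lambda>i. c (p + i)) s"
    unfolding lincomb_def by (rule sum_lessThan_append)
  finally show ?thesis .
qed

lemma lincomb_in_subspace: "subspace W \<Longrightarrow> (\<And>j. j < d \<Longrightarrow> e j \<in> W) \<Longrightarrow> lincomb scale d c e \<in> W"
  unfolding lincomb_def by (intro subspace_sum subspace_scale) auto

lemma quot_basis_in: "quot_basis scale U W d e \<Longrightarrow> j < d \<Longrightarrow> e j \<in> U"
  unfolding quot_basis_def by blast

lemma quot_basis_spans: "quot_basis scale U W d e \<Longrightarrow> u \<in> U \<Longrightarrow> \<exists>c. u - lincomb scale d c e \<in> W"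
  unfolding quot_basis_def by blast

lemma quot_basis_independent: "quot_basis scale U W d e \<Longrightarrow> lincomb scale d c e \<in> W \<Longrightarrow> j < d \<Longrightarrow> c j = 0"
  unfolding quot_basis_def by blast

lemma lincomb_quot_basis_in: "subspace U \<Longrightarrow> quot_basis scale U W d e \<Longrightarrow> lincomb scale d c e \<in> U"
  by (intro lincomb_in_subspace) (auto intro: quot_basis_in)

lemma minimal_span_plus_independent:
  assumes W: "subspace W" and F: "finite F" "F \<subseteq> U" "U \<subseteq> span F + W"
    and minimal: "\<And>F'. finite F' \<Longrightarrow> F' \<subseteq> U \<Longrightarrow> U \<subseteq> span F' + W \<Longrightarrow> card F \<le> card F'"
    and cW: "(\<Sum>f\<in>F. c f *s f) \<in> W" and e: "e \<in> F"
  shows "c e = 0"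
proof (rule ccontr)
  assume ce: "c e \<noteq> 0"
  define R where "R = F - {e}"
  have Fe: "F = insert e R" using e unfolding R_def by auto
  have "(\<Sum>f\<in>F. c f *s f) = c e *s e + (\<Sum>f\<in>R. c f *s f)"
    using e F(1) unfolding R_def by (simp add: sum.remove)
  moreover define y where "y = - (inverse (c e) *s (\<Sum>f\<in>R. c f *s f))"
  ultimately have "e - y = inverse (c e) *s (\<Sum>f\<in>F. c f *s f)"
    using ce by (simp add: scale_right_distrib)
  then have eyW: "e - y \<in> W" using subspace_scale[OF W cW] by simp
  have yR: "y \<in> span R" unfolding y_def
    by (intro span_neg span_scale span_sum) (auto intro: span_base)
  have "U \<subseteq> span R + W"
  proof
    fix x assume "x \<in> U"
    then obtain y' where y': "y' \<in> span F" "x - y' \<in> W" using F(3) by (blast elim: set_plus_diffE)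
    then obtain k where k: "y' - k *s e \<in> span R" using span_breakdown_eq Fe by auto
    have "y' - k *s e + k *s y \<in> span R" using k yR span_add span_scale by blast
    moreover have "x - (y' - k *s e + k *s y) = (x - y') + k *s (e - y)"
      by (simp add: scale_right_diff_distrib algebra_simps)
    then have "x - (y' - k *s e + k *s y) \<in> W" using y'(2) eyW W subspace_add subspace_scale by metis
    ultimately show "x \<in> span R + W" by (rule set_plus_diffI)
  qed
  then have "card F \<le> card R" using minimal F unfolding R_def by auto
  moreover have "card R < card F" using F(1) e unfolding R_def by (meson card_Diff1_less)
  ultimately show False by simp
qed

lemma quot_basis_exists:
  assumes W: "subspace W" and F: "finite F" "F \<subseteq> U" "U \<subseteq> span F + W"
  shows "\<exists>d e. quot_basis scale U W d e"
proof -
  define P where "P n \<longleftrightarrow> (\<exists>F'. finite F' \<and> F' \<subseteq> U \<and> U \<subseteq> span F' + W \<and> card F' = n)" for n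
  have "P (card F)" unfolding P_def using F by blast
  then have "P (LEAST n. P n)" by (rule LeastI)
  then obtain F0 where F0: "finite F0" "F0 \<subseteq> U" "U \<subseteq> span F0 + W" "card F0 = (LEAST n. P n)"
    unfolding P_def by blast
  have minimal: "card F0 \<le> card F'" if "finite F'" "F' \<subseteq> U" "U \<subseteq> span F' + W" for F'
    using Least_le[of P "card F'"] that F0(4) unfolding P_def by auto
  obtain h where h: "bij_betw h {..<card F0} F0"
    using ex_bij_betw_nat_finite[OF F0(1)] unfolding atLeast0LessThan by blast
  have inj: "inj_on h {..<card F0}" and img: "h ` {..<card F0} = F0"
    using h by (auto simp: bij_betw_def)
  have reindex: "(\<Sum>f\<in>F0. c' f *s f) = lincomb scale (card F0) (\<lambda>j. c' (h j)) h" for c'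
    unfolding lincomb_def using sum.reindex[OF inj, of "\<lambda>f. c' f *s f"] img by simp
  have "quot_basis scale U W (card F0) h"
    unfolding quot_basis_def
  proof (intro conjI allI impI ballI)
    show "h j \<in> U" if "j < card F0" for j using that img F0(2) by auto
  next
    fix u assume "u \<in> U"
    then obtain y where y: "y \<in> span F0" "u - y \<in> W" using F0(3) by (blast elim: set_plus_diffE)
    then obtain c' where "y = (\<Sum>f\<in>F0. c' f *s f)" using span_finite[OF F0(1)] by auto
    then show "\<exists>c. u - lincomb scale (card F0) c h \<in> W" using y(2) reindex by metis
  next
    fix c j assume cW: "lincomb scale (card F0) c h \<in> W" and j: "j < card F0"
    define c' where "c' f = c (the_inv_into {..<card F0} h f)" for f
    have c'h: "c' (h i) = c i" if "i < card F0" for i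
      unfolding c'_def using the_inv_into_f_f[OF inj] that by auto
    have "(\<Sum>f\<in>F0. c' f *s f) = lincomb scale (card F0) c h"
      unfolding reindex using c'h by (intro lincomb_cong) auto
    then have "(\<Sum>f\<in>F0. c' f *s f) \<in> W" using cW by simp
    then have "c' (h j) = 0"
      using minimal_span_plus_independent[OF W F0(1-3) minimal] img j by blast
    then show "c j = 0" using c'h j by simp
  qed
  then show ?thesis by blast
qed

lemma finite_codim_preimage:
  assumes K: "subspace K" and W: "subspace W" and F: "finite F"
    and phi_add: "\<And>x y. phi (x + y) = phi x + phi y"
    and phi_scale: "\<And>c x. phi (c *s x) = c *s phi x"
    and img: "phi ` K \<subseteq> span F + W"
  shows "\<exists>E. finite E \<and> E \<subseteq> K \<and> (\<forall>x\<in>K. \<exists>y\<in>span E. phi (x - y) \<in> W)"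
proof -
  have phi0: "phi 0 = 0" using phi_add[of 0 0] by simp
  have phi_diff: "phi (x - y) = phi x - phi y" for x y
    using phi_add[of "x - y" y] by (simp add: algebra_simps)
  have phi_sum: "phi (\<Sum>b\<in>S. c b *s k b) = (\<Sum>b\<in>S. c b *s phi (k b))" if "finite S" for S c k
    using that by (induction S rule: finite_induct) (auto simp: phi0 phi_add phi_scale)
  define Z where "Z = span F \<inter> {z. \<exists>k\<in>K. phi k - z \<in> W}"
  obtain B where B: "B \<subseteq> Z" "independent B" "Z \<subseteq> span B"
    by (rule basis_exists)
  have finB: "finite B" using independent_span_bound[OF F B(2)] B(1) unfolding Z_def by auto
  have "\<forall>b\<in>B. \<exists>k\<in>K. phi k - b \<in> W" using B(1) unfolding Z_def by auto
  then obtain kb where kb: "\<And>b. b \<in> B \<Longrightarrow> kb b \<in> K \<and> phi (kb b) - b \<in> W" by metis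
  have "\<exists>y\<in>span (kb ` B). phi (x - y) \<in> W" if x: "x \<in> K" for x
  proof -
    obtain y where y: "y \<in> span F" "phi x - y \<in> W" using img x by (blast elim: set_plus_diffE)
    have "y \<in> span B" using B(3) y x unfolding Z_def by auto
    then obtain c where yc: "y = (\<Sum>b\<in>B. c b *s b)" using span_finite[OF finB] by auto
    define y' where "y' = (\<Sum>b\<in>B. c b *s kb b)"
    have y'E: "y' \<in> span (kb ` B)" unfolding y'_def
      by (intro span_sum span_scale span_base) auto
    have "phi (x - y') = (phi x - y) - (\<Sum>b\<in>B. c b *s (phi (kb b) - b))"
      unfolding phi_diff y'_def phi_sum[OF finB] yc
      by (simp add: scale_right_diff_distrib sum_subtractf)
    also have "\<dots> \<in> W"
      using kb by (intro subspace_diff[OF W y(2)] subspace_sum[OF W] subspace_scale[OF W]) auto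
    finally show ?thesis using y'E by blast
  qed
  moreover have "finite (kb ` B)" "kb ` B \<subseteq> K" using finB kb by auto
  ultimately show ?thesis by blast
qed

lemma coord_spec:
  assumes "quot_basis scale U W d e" and "u \<in> U"
  shows "(\<forall>j. d \<le> j \<longrightarrow> coord scale W d e u j = 0) \<and> u - lincomb scale d (coord scale W d e u) e \<in> W"
proof -
  obtain c where c: "u - lincomb scale d c e \<in> W" using quot_basis_spans[OF assms] by blast
  define c' where "c' j = (if j < d then c j else 0)" for j
  have "lincomb scale d c' e = lincomb scale d c e" unfolding c'_def by (rule lincomb_cong) auto
  then have "(\<forall>j. d \<le> j \<longrightarrow> c' j = 0) \<and> u - lincomb scale d c' e \<in> W" using c unfolding c'_def by auto
  then show ?thesis unfolding coord_def by (rule someI[where P="\<lambda>c. (\<forall>j. d \<le> j \<longrightarrow> c j = 0) \<and> u - lincomb scale d c e \<in> W"])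
qed

lemma coord_unique:
  assumes W: "subspace W" and qb: "quot_basis scale U W d e" and u: "u \<in> U"
    and c: "u - lincomb scale d c e \<in> W" and j: "j < d"
  shows "coord scale W d e u j = c j"
proof -
  have s: "u - lincomb scale d (coord scale W d e u) e \<in> W" using coord_spec[OF qb u] by blast
  have "lincomb scale d (\<lambda>j. coord scale W d e u j - c j) e
      = (u - lincomb scale d c e) - (u - lincomb scale d (coord scale W d e u) e)"
    unfolding lincomb_diff_coeffs by simp
  also have "\<dots> \<in> W" using subspace_diff[OF W c s] .
  finally have "coord scale W d e u j - c j = 0" using quot_basis_independent[OF qb _ j] by blast
  then show ?thesis by simp
qed

lemma coord_eq:
  assumes W: "subspace W" and qb: "quot_basis scale U W d e" and u: "u \<in> U"
    and c: "u - lincomb scale d c e \<in> W" and cz: "\<forall>j. d \<le> j \<longrightarrow> c j = 0"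
  shows "coord scale W d e u = c"
proof
  fix j show "coord scale W d e u j = c j"
    using coord_unique[OF W qb u c] coord_spec[OF qb u] cz by (cases "j < d") auto
qed

lemma coord_add:
  assumes W: "subspace W" and U: "subspace U" and qb: "quot_basis scale U W d e" and u: "u \<in> U" and v: "v \<in> U"
  shows "coord scale W d e (u + v) = (\<lambda>i. coord scale W d e u i + coord scale W d e v i)"
proof (rule coord_eq[OF W qb subspace_add[OF U u v]])
  have "u + v - lincomb scale d (\<lambda>i. coord scale W d e u i + coord scale W d e v i) e
     = (u - lincomb scale d (coord scale W d e u) e) + (v - lincomb scale d (coord scale W d e v) e)"
    unfolding lincomb_add_coeffs by (simp add: algebra_simps)
  also have "\<dots> \<in> W" using coord_spec[OF qb u] coord_spec[OF qb v] subspace_add[OF W] by blast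
  finally show "u + v - lincomb scale d (\<lambda>i. coord scale W d e u i + coord scale W d e v i) e \<in> W" .
qed (use coord_spec[OF qb u] coord_spec[OF qb v] in auto)

lemma coord_scale:
  assumes W: "subspace W" and U: "subspace U" and qb: "quot_basis scale U W d e" and u: "u \<in> U"
  shows "coord scale W d e (k *s u) = (\<lambda>i. k * coord scale W d e u i)"
proof (rule coord_eq[OF W qb subspace_scale[OF U u]])
  have "k *s u - lincomb scale d (\<lambda>i. k * coord scale W d e u i) e = k *s (u - lincomb scale d (coord scale W d e u) e)"
    by (simp add: lincomb_scale scale_right_diff_distrib)
  then show "k *s u - lincomb scale d (\<lambda>i. k * coord scale W d e u i) e \<in> W"
    using coord_spec[OF qb u] subspace_scale[OF W] by auto
qed (use coord_spec[OF qb u] in auto)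

lemma coord_zero_mod:
  assumes W: "subspace W" and qb: "quot_basis scale U W d e" and WU: "W \<subseteq> U" and w: "w \<in> W"
  shows "coord scale W d e w = (\<lambda>_. 0)"
  by (rule coord_eq[OF W qb]) (use w WU in \<open>auto simp: lincomb_zero_coeffs\<close>)

lemma coord_lincomb:
  assumes W: "subspace W" and U: "subspace U" and qb: "quot_basis scale U W d e"
    and v: "\<forall>i. d \<le> i \<longrightarrow> v i = 0"
  shows "coord scale W d e (lincomb scale d v e) = v"
  by (rule coord_eq[OF W qb lincomb_quot_basis_in[OF U qb]]) (use v subspace_0[OF W] in auto)

lemma lincomb_section_columns:
  assumes "\<forall>i<q. \<forall>j<q. \<sigma> (p + i) j = (if i = j then 1 else 0)"
  shows "lincomb scale q c (\<lambda>j. lincomb scale (p + q) (\<lambda>l. \<sigma> l j) (\<lambda>i. if i < p then t i else s (i - p)))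
       = lincomb scale p (\<lambda>i. \<Sum>j<q. \<sigma> i j * c j) t + lincomb scale q c s"
proof -
  have "(\<Sum>j<q. \<sigma> (p + i) j * c j) = c i" if "i < q" for i
  proof -
    have "(\<Sum>j<q. \<sigma> (p + i) j * c j) = (\<Sum>j<q. if i = j then c j else 0)"
      using assms that by (intro sum.cong) auto
    also have "\<dots> = c i" using that by (simp add: sum.delta)
    finally show ?thesis .
  qed
  then have "lincomb scale q (\<lambda>i. \<Sum>j<q. \<sigma> (p + i) j * c j) s = lincomb scale q c s"
    by (intro lincomb_cong) simp_all
  moreover have "lincomb scale q c (\<lambda>j. lincomb scale (p + q) (\<lambda>l. \<sigma> l j) (\<lambda>i. if i < p then t i else s (i - p)))
      = lincomb scale (p + q) (\<lambda>i. \<Sum>j<q. \<sigma> i j * c j) (\<lambda>i. if i < p then t i else s (i - p))"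
    by (rule lincomb_lincomb)
  ultimately show ?thesis unfolding lincomb_append by simp
qed

lemma quot_basis_append:
  assumes W: "subspace W" and U: "subspace U" and WU: "W \<subseteq> U" and UX: "U \<subseteq> X"
    and qT: "quot_basis scale U W p t" and qS: "quot_basis scale X U q s"
  shows "quot_basis scale X W (p + q) (\<lambda>i. if i < p then t i else s (i - p))"
  unfolding quot_basis_def
proof (intro conjI allI impI ballI)
  let ?ee = "\<lambda>i. if i < p then t i else s (i - p)"
  fix j assume "j < p + q"
  then show "?ee j \<in> X" using quot_basis_in[OF qT] quot_basis_in[OF qS] UX by auto
next
  let ?ee = "\<lambda>i. if i < p then t i else s (i - p)"
  fix u assume u: "u \<in> X"
  obtain cS where cS: "u - lincomb scale q cS s \<in> U" using quot_basis_spans[OF qS u] by blast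
  obtain cT where cT: "(u - lincomb scale q cS s) - lincomb scale p cT t \<in> W" using quot_basis_spans[OF qT cS] by blast
  define c where "c i = (if i < p then cT i else cS (i - p))" for i
  have "lincomb scale (p + q) c ?ee = lincomb scale p cT t + lincomb scale q cS s"
    unfolding lincomb_append c_def by (simp cong: lincomb_cong)
  then show "\<exists>c. u - lincomb scale (p + q) c ?ee \<in> W" using cT by (metis diff_diff_eq add.commute)
next
  let ?ee = "\<lambda>i. if i < p then t i else s (i - p)"
  fix c j assume cW: "lincomb scale (p + q) c ?ee \<in> W" and j: "j < p + q"
  have "lincomb scale q (\<lambda>i. c (p + i)) s = lincomb scale (p + q) c ?ee - lincomb scale p c t"
    unfolding lincomb_append by simp
  also have "\<dots> \<in> U" using cW WU lincomb_quot_basis_in[OF U qT] subspace_diff[OF U] by blast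
  finally have b0: "\<forall>i<q. c (p + i) = 0" using quot_basis_independent[OF qS] by blast
  then have "lincomb scale q (\<lambda>i. c (p + i)) s = 0" by (intro lincomb_zero_coeffs) simp
  then have "lincomb scale p c t \<in> W" using cW unfolding lincomb_append by simp
  then have "\<forall>i<p. c i = 0" using quot_basis_independent[OF qT] by blast
  then show "c j = 0" using b0 j by (cases "j < p") (auto dest: spec[of _ "j - p"])
qed

end

locale subalgebra =
  fixes smul :: "'k::field \<Rightarrow> 'a::ring_1 \<Rightarrow> 'a" and G :: "'a set"
  assumes kalg: "kalg smul" and subalg: "subalg smul G"
begin

sublocale vs: vector_space smul
  using kalg unfolding kalg_def by auto

lemma smul_mult_left: "smul c (x * y) = smul c x * y"
  using kalg unfolding kalg_def by auto

lemma smul_mult_right: "smul c (x * y) = x * smul c y"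
  using kalg unfolding kalg_def by metis

lemma G_zero: "0 \<in> G" and G_one: "1 \<in> G"
  and G_add: "x \<in> G \<Longrightarrow> y \<in> G \<Longrightarrow> x + y \<in> G"
  and G_mult: "x \<in> G \<Longrightarrow> y \<in> G \<Longrightarrow> x * y \<in> G"
  and G_uminus: "x \<in> G \<Longrightarrow> - x \<in> G"
  and G_smul: "x \<in> G \<Longrightarrow> smul c x \<in> G"
  using subalg unfolding subalg_def by blast+

lemma G_diff: "x \<in> G \<Longrightarrow> y \<in> G \<Longrightarrow> x - y \<in> G"
  using G_add G_uminus by (metis diff_conv_add_uminus)

lemma ideal2_G: "ideal2 G G"
  unfolding ideal2_def using G_zero G_add G_uminus G_mult by blast

lemma findim_quot_iff: "findim_quot smul G I \<longleftrightarrow> (\<exists>F. finite F \<and> F \<subseteq> G \<and> G \<subseteq> vs.span F + I)"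
  by (simp add: findim_quot_def subset_iff set_plus_iff_diff Ball_def)

definition submodule :: "'a set \<Rightarrow> bool" where
  "submodule U \<longleftrightarrow> 0 \<in> U \<and> (\<forall>x\<in>U. \<forall>y\<in>U. x + y \<in> U) \<and> (\<forall>x\<in>U. - x \<in> U) \<and> (\<forall>g\<in>G. \<forall>x\<in>U. g * x \<in> U)"

lemma
  assumes "submodule U"
  shows submodule_zero: "0 \<in> U"
    and submodule_add: "x \<in> U \<Longrightarrow> y \<in> U \<Longrightarrow> x + y \<in> U"
    and submodule_uminus: "x \<in> U \<Longrightarrow> - x \<in> U"
    and submodule_mult: "g \<in> G \<Longrightarrow> x \<in> U \<Longrightarrow> g * x \<in> U"
  using assms unfolding submodule_def by blast+

lemma submodule_diff: "submodule U \<Longrightarrow> x \<in> U \<Longrightarrow> y \<in> U \<Longrightarrow> x - y \<in> U"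
  using submodule_add submodule_uminus by (metis diff_conv_add_uminus)

lemma submodule_smul: "submodule U \<Longrightarrow> x \<in> U \<Longrightarrow> smul c x \<in> U"
  using submodule_mult[of U "smul c 1" x] G_smul[OF G_one] smul_mult_left[of c 1 x] by simp

lemma submodule_subspace: "submodule U \<Longrightarrow> vs.subspace U"
  unfolding vs.subspace_def using submodule_zero submodule_add submodule_smul by blast

lemma submodule_sum: "submodule U \<Longrightarrow> (\<And>i. i \<in> S \<Longrightarrow> f i \<in> U) \<Longrightarrow> sum f S \<in> U"
  using vs.subspace_sum submodule_subspace by blast

lemma submodule_lincomb: "submodule U \<Longrightarrow> (\<And>j. j < d \<Longrightarrow> e j \<in> U) \<Longrightarrow> lincomb smul d c e \<in> U"
  using vs.lincomb_in_subspace submodule_subspace by blast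

lemma submodule_Int: "submodule U \<Longrightarrow> submodule V \<Longrightarrow> submodule (U \<inter> V)"
  unfolding submodule_def by blast

lemma ideal2_submodule: "ideal2 G I \<Longrightarrow> submodule I"
  unfolding ideal2_def submodule_def by blast

lemma submodule_set_plus:
  assumes S: "submodule S" and W: "submodule W"
  shows "submodule (S + W)"
  unfolding submodule_def
proof (intro conjI ballI)
  show "0 \<in> S + W" using submodule_zero[OF S] submodule_zero[OF W] by (metis add_0 set_plus_intro)
next
  fix x y assume "x \<in> S + W" "y \<in> S + W"
  then obtain s s' w w' where "x = s + w" "y = s' + w'" "s \<in> S" "s' \<in> S" "w \<in> W" "w' \<in> W"
    by (auto elim!: set_plus_elim)
  then have "x + y = (s + s') + (w + w')" "s + s' \<in> S" "w + w' \<in> W"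
    using submodule_add[OF S] submodule_add[OF W] by (simp_all add: algebra_simps)
  then show "x + y \<in> S + W" by (metis set_plus_intro)
next
  fix x assume "x \<in> S + W"
  then obtain s w where "x = s + w" "s \<in> S" "w \<in> W" by (auto elim!: set_plus_elim)
  then have "- x = - s + - w" "- s \<in> S" "- w \<in> W"
    using submodule_uminus[OF S] submodule_uminus[OF W] by simp_all
  then show "- x \<in> S + W" by (metis set_plus_intro)
next
  fix g x assume g: "g \<in> G" and "x \<in> S + W"
  then obtain s w where "x = s + w" "s \<in> S" "w \<in> W" by (auto elim!: set_plus_elim)
  then have "g * x = g * s + g * w" "g * s \<in> S" "g * w \<in> W"
    using submodule_mult[OF S g] submodule_mult[OF W g] by (simp_all add: distrib_left)
  then show "g * x \<in> S + W" by (metis set_plus_intro)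
qed

lemma submodule_cyclic: "submodule ((\<lambda>g. g * a) ` G)"
  unfolding submodule_def
proof (intro conjI ballI)
  show "0 \<in> (\<lambda>g. g * a) ` G" using G_zero by (auto intro: image_eqI[of _ _ 0])
  fix x y assume "x \<in> (\<lambda>g. g * a) ` G" "y \<in> (\<lambda>g. g * a) ` G"
  then show "x + y \<in> (\<lambda>g. g * a) ` G"
    using G_add by (auto simp: distrib_right[symmetric])
next
  fix x assume "x \<in> (\<lambda>g. g * a) ` G"
  then show "- x \<in> (\<lambda>g. g * a) ` G" using G_uminus by (auto intro: image_eqI[of _ _ "- _"])
next
  fix h x assume "h \<in> G" "x \<in> (\<lambda>g. g * a) ` G"
  then show "h * x \<in> (\<lambda>g. g * a) ` G" using G_mult by (auto simp: mult.assoc[symmetric])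
qed

lemma submodule_ideal_prod:
  assumes "ideal2 G I"
  shows "submodule (ideal_prod I U)"
  unfolding submodule_def
proof (intro conjI ballI)
  show "0 \<in> ideal_prod I U" by (rule zero_in_ideal_prod)
  show "x + y \<in> ideal_prod I U" if "x \<in> ideal_prod I U" "y \<in> ideal_prod I U" for x y
    using that by (rule ideal_prod_add)
  show "- x \<in> ideal_prod I U" if "x \<in> ideal_prod I U" for x
    using ideal2_uminus[OF assms] that by (rule ideal_prod_uminus)
  show "g * x \<in> ideal_prod I U" if "g \<in> G" "x \<in> ideal_prod I U" for g x
    using ideal2_mult_left[OF assms that(1)] that(2) by (rule ideal_prod_mult_left)
qed

definition ann :: "'a set \<Rightarrow> 'a set \<Rightarrow> 'a set" where
  "ann U W = {g\<in>G. \<forall>x\<in>U. g * x \<in> W}"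

lemma ideal2_ann:
  assumes "submodule U" and "submodule W"
  shows "ideal2 G (ann U W)"
  unfolding ideal2_def ann_def
  using assms G_zero G_add G_uminus G_mult submodule_zero submodule_add submodule_uminus submodule_mult
  by (auto simp: distrib_right mult.assoc)

definition simple_quot :: "'a set \<Rightarrow> 'a set \<Rightarrow> bool" where
  "simple_quot U W \<longleftrightarrow> W \<subseteq> U \<and> U \<noteq> W \<and> (\<forall>Z. submodule Z \<and> W \<subseteq> Z \<and> Z \<subseteq> U \<longrightarrow> Z = W \<or> Z = U)"

lemma
  assumes "simple_quot U W"
  shows simple_quot_subset: "W \<subseteq> U"
    and simple_quot_neq: "U \<noteq> W"
    and simple_quotD: "submodule Z \<Longrightarrow> W \<subseteq> Z \<Longrightarrow> Z \<subseteq> U \<Longrightarrow> Z = W \<or> Z = U"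
  using assms unfolding simple_quot_def by blast+

lemma simple_quot_exists:
  assumes W: "submodule W" and U: "submodule U" and WU: "W \<subseteq> U" "\<not> U \<subseteq> W"
    and sp: "U \<subseteq> vs.span F + W" and F: "finite F"
  shows "\<exists>U1. submodule U1 \<and> U1 \<subseteq> U \<and> simple_quot U1 W"
proof -
  define P where "P Z \<longleftrightarrow> submodule Z \<and> W \<subseteq> Z \<and> Z \<subseteq> U \<and> Z \<noteq> W" for Z
  define m where "m Z = vs.dim (vs.span F \<inter> Z)" for Z
  have "P U" unfolding P_def using U WU by blast
  then obtain U1 where U1: "P U1" and minimal: "\<And>Z. P Z \<Longrightarrow> m U1 \<le> m Z"
    using ex_has_least_nat[of P U m] by blast
  have U1s: "submodule U1" "W \<subseteq> U1" "U1 \<subseteq> U" "U1 \<noteq> W" using U1 unfolding P_def by auto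
  have "Z = W \<or> Z = U1" if Z: "submodule Z" "W \<subseteq> Z" "Z \<subseteq> U1" for Z
  proof (rule ccontr)
    assume c: "\<not> (Z = W \<or> Z = U1)"
    then have "P Z" unfolding P_def using Z U1s by blast
    moreover have "m Z < m U1" unfolding m_def
      using vs.dim_span_Int_strict_mono[OF submodule_subspace[OF Z(1)] submodule_subspace[OF U1s(1)]]
        Z c U1s(3) sp F by blast
    ultimately show False using minimal by fastforce
  qed
  then have "simple_quot U1 W" unfolding simple_quot_def using U1s by blast
  then show ?thesis using U1s by blast
qed

lemma
  assumes "M \<in> cfs smul G"
  shows cfs_ideal2: "ideal2 G M"
    and cfs_neq: "M \<noteq> G"
    and cfs_maximal: "ideal2 G I \<Longrightarrow> M \<subseteq> I \<Longrightarrow> I = M \<or> I = G"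
  using assms unfolding cfs_def by blast+

lemma one_notin_ideal2:
  assumes I: "ideal2 G I" and ne: "I \<noteq> G"
  shows "1 \<notin> I"
proof
  assume "1 \<in> I"
  then have "G \<subseteq> I" using ideal2_mult_left[OF I] by (metis mult.right_neutral subsetI)
  then show False using ne ideal2_subset[OF I] by blast
qed

lemma ideal2_set_plus:
  assumes I: "ideal2 G I" and J: "ideal2 G J"
  shows "ideal2 G (I + J)"
proof -
  have "I + J \<subseteq> G" using ideal2_subset[OF I] ideal2_subset[OF J] G_add by (auto elim!: set_plus_elim)
  moreover have "x * g \<in> I + J" if g: "g \<in> G" and x: "x \<in> I + J" for g x
  proof -
    obtain a b where "x = a + b" "a \<in> I" "b \<in> J" using x by (auto elim!: set_plus_elim)
    then have "x * g = a * g + b * g" "a * g \<in> I" "b * g \<in> J"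
      using ideal2_mult_right[OF I g] ideal2_mult_right[OF J g] by (simp_all add: distrib_right)
    then show ?thesis by (metis set_plus_intro)
  qed
  ultimately show ?thesis
    using submodule_set_plus[OF ideal2_submodule[OF I] ideal2_submodule[OF J]]
    unfolding ideal2_def submodule_def by blast
qed

lemma cfs_prime:
  assumes M: "M \<in> cfs smul G" and I: "ideal2 G I" and J: "ideal2 G J"
    and sub: "ideal_prod I J \<subseteq> M"
  shows "I \<subseteq> M \<or> J \<subseteq> M"
proof (rule ccontr)
  assume "\<not> (I \<subseteq> M \<or> J \<subseteq> M)"
  then obtain x where x: "x \<in> I" "x \<notin> M" and JM: "\<not> J \<subseteq> M" by auto
  have Mi: "ideal2 G M" using cfs_ideal2[OF M] .
  have "M \<subseteq> I + M" using ideal2_zero[OF I] by (metis add_0 set_plus_intro subsetI)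
  moreover have "x \<in> I + M" using x(1) ideal2_zero[OF Mi] by (metis add_0_right set_plus_intro)
  ultimately have "I + M = G" using cfs_maximal[OF M ideal2_set_plus[OF I Mi]] x(2) by auto
  then obtain a b where ab: "1 = a + b" "a \<in> I" "b \<in> M" using G_one by (auto elim!: set_plus_elim)
  have "J \<subseteq> M"
  proof
    fix y assume y: "y \<in> J"
    have "y = a * y + b * y" using ab(1) by (metis distrib_right mult_1)
    moreover have "a * y \<in> M" using sub mult_in_ideal_prod[OF ab(2) y] by auto
    moreover have "b * y \<in> M" using ideal2_mult_right[OF Mi _ ab(3)] ideal2_subset[OF J] y by auto
    ultimately show "y \<in> M" using ideal2_add[OF Mi] by metis
  qed
  then show False using JM by simp
qed

lemma ideal2_Wset: "I \<in> Wset G B \<Longrightarrow> B \<subseteq> cfs smul G \<Longrightarrow> ideal2 G I"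
  by (induction rule: Wset.induct) (auto intro: ideal2_G ideal2_ideal_prod cfs_ideal2)

lemma cfs_supset_Wset_in_class:
  assumes "I \<in> Wset G B" and "B \<subseteq> cfs smul G" and "M \<in> cfs smul G" and "I \<subseteq> M"
  shows "M \<in> B"
  using assms
proof (induction rule: Wset.induct)
  case Wnil
  then show ?case using cfs_neq cfs_ideal2[THEN ideal2_subset] by blast
next
  case (Wcons I n)
  have nc: "n \<in> cfs smul G" using Wcons by auto
  from cfs_prime[OF Wcons(5) ideal2_Wset[OF Wcons(1,4)] cfs_ideal2[OF nc] Wcons(6)] show ?case
  proof
    assume "n \<subseteq> M"
    then have "M = n \<or> M = G" using cfs_maximal[OF nc cfs_ideal2[OF Wcons(5)]] by blast
    then show ?thesis using cfs_neq[OF Wcons(5)] Wcons(2) by auto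
  qed (use Wcons.IH[OF Wcons(4,5)] in simp)
qed

lemma cfs_supset_exists:
  assumes I: "ideal2 G I" and IG: "I \<noteq> G" and fq: "findim_quot smul G I"
  shows "\<exists>M\<in>cfs smul G. I \<subseteq> M"
proof -
  obtain F where F: "finite F" "F \<subseteq> G" "G \<subseteq> vs.span F + I"
    using fq unfolding findim_quot_iff by blast
  define P where "P J \<longleftrightarrow> ideal2 G J \<and> I \<subseteq> J \<and> J \<noteq> G" for J
  define m where "m J = vs.dim (vs.span F \<inter> J)" for J
  have "P I" unfolding P_def using I IG by simp
  moreover have "m J < Suc (card F)" for J
    unfolding m_def using vs.dim_le_card[of "vs.span F \<inter> J" F] F(1) by auto
  ultimately obtain M where M: "P M" and greatest: "\<And>J. P J \<Longrightarrow> m J \<le> m M"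
    using Lattices_Big.ex_has_greatest_nat[of P I m "Suc (card F)"] by blast
  have Mi: "ideal2 G M" "I \<subseteq> M" "M \<noteq> G" using M unfolding P_def by simp_all
  have "J = M \<or> J = G" if J: "ideal2 G J" and MJ: "M \<subseteq> J" for J
  proof (rule ccontr)
    assume c: "\<not> (J = M \<or> J = G)"
    then have "P J" unfolding P_def using J MJ Mi(2) by auto
    moreover have "m M < m J" unfolding m_def
      using vs.dim_span_Int_strict_mono[OF submodule_subspace[OF ideal2_submodule[OF Mi(1)]]
          submodule_subspace[OF ideal2_submodule[OF J]] MJ _ Mi(2) _ F(1)]
        c ideal2_subset[OF J] F(3) by auto
    ultimately show False using greatest by fastforce
  qed
  then have "M \<in> cfs smul G"
    unfolding cfs_def using Mi findim_quot_mono[OF fq Mi(2)] by blast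
  then show ?thesis using Mi(2) by blast
qed

abbreviation classes :: "'a set set set" where
  "classes \<equiv> cfs smul G // sim_rel smul G"

lemma equiv_sim_rel: "equiv (cfs smul G) (sim_rel smul G)"
proof -
  let ?r = "\<lambda>x y. x \<in> cfs smul G \<and> y \<in> cfs smul G \<and> (ext1_nz smul G x y \<or> ext1_nz smul G y x)"
  have "symp ?r\<^sup>*\<^sup>*" by (rule symp_rtranclp) (auto simp: symp_def)
  then show ?thesis
    unfolding sim_rel_def equiv_def refl_on_def sym_def trans_def
    by (auto dest: sympD intro: rtranclp_trans)
qed

lemma classes_subset: "B \<in> classes \<Longrightarrow> B \<subseteq> cfs smul G"
  using in_quotient_imp_subset[OF equiv_sim_rel] by blast

lemma classes_eq: "B \<in> classes \<Longrightarrow> B' \<in> classes \<Longrightarrow> M \<in> B \<Longrightarrow> M \<in> B' \<Longrightarrow> B = B'"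
  using quotient_disj[OF equiv_sim_rel] by blast

lemma class_in_classes: "M \<in> cfs smul G \<Longrightarrow> sim_rel smul G `` {M} \<in> classes"
  by (rule quotientI)

lemma in_own_class: "M \<in> cfs smul G \<Longrightarrow> M \<in> sim_rel smul G `` {M}"
  using equiv_class_self[OF equiv_sim_rel] by blast

lemma not_ext1_nz_other_class:
  assumes "M \<in> cfs smul G" and "M' \<in> cfs smul G" and "M' \<notin> sim_rel smul G `` {M}"
  shows "\<not> ext1_nz smul G M' M"
  using assms unfolding sim_rel_def by auto

lemma Wset_comaximal:
  assumes qn: "quasinoetherian smul G (sim_rel smul G)"
    and B: "B \<in> classes" and B': "B' \<in> classes" and ne: "B \<noteq> B'"
    and n: "n \<in> Wset G B" and n': "n' \<in> Wset G B'"
  shows "\<exists>x\<in>n. \<exists>y\<in>n'. x + y = 1"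
proof -
  have ni: "ideal2 G n" using ideal2_Wset[OF n classes_subset[OF B]] .
  have ni': "ideal2 G n'" using ideal2_Wset[OF n' classes_subset[OF B']] .
  have nS: "n \<subseteq> n + n'" using ideal2_zero[OF ni'] by (metis add_0_right set_plus_intro subsetI)
  have n'S: "n' \<subseteq> n + n'" using ideal2_zero[OF ni] by (metis add_0 set_plus_intro subsetI)
  have "n + n' = G"
  proof (rule ccontr)
    assume "n + n' \<noteq> G"
    moreover have "findim_quot smul G (n + n')"
      using qn B n nS findim_quot_mono unfolding quasinoetherian_def by blast
    ultimately obtain M where M: "M \<in> cfs smul G" "n + n' \<subseteq> M"
      using cfs_supset_exists[OF ideal2_set_plus[OF ni ni']] by blast
    have "M \<in> B" using cfs_supset_Wset_in_class[OF n classes_subset[OF B] M(1)] nS M(2) by blast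
    moreover have "M \<in> B'" using cfs_supset_Wset_in_class[OF n' classes_subset[OF B'] M(1)] n'S M(2) by blast
    ultimately show False using classes_eq[OF B B'] ne by blast
  qed
  then obtain x y where "1 = x + y" "x \<in> n" "y \<in> n'" using G_one by (auto elim!: set_plus_elim)
  then show ?thesis by metis
qed

section \<open>Annihilators of simple subquotients\<close>

lemma quot_basis_exists_finite:
  assumes W: "submodule W" and U: "submodule U" and WU: "W \<subseteq> U"
    and sp: "U \<subseteq> vs.span F + W" and F: "finite F"
  shows "\<exists>d e. quot_basis smul U W d e"
proof -
  obtain F' where "finite F'" "F' \<subseteq> U" "U \<subseteq> vs.span F' + W"
    using vs.span_plus_within[OF submodule_subspace[OF U] WU sp F] by blast
  then show ?thesis using vs.quot_basis_exists[OF submodule_subspace[OF W]] by blast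
qed

lemma mult_lincomb: "g * lincomb smul d c e = lincomb smul d c (\<lambda>j. g * e j)"
  unfolding lincomb_def by (simp add: sum_distrib_left smul_mult_right)

lemma ann_if_kills_quot_basis:
  assumes W: "submodule W" and qb: "quot_basis smul U W d e" and g: "g \<in> G"
    and kill: "\<And>j. j < d \<Longrightarrow> g * e j \<in> W"
  shows "g \<in> ann U W"
  unfolding ann_def
proof (intro CollectI conjI ballI)
  fix u assume "u \<in> U"
  then obtain c where c: "u - lincomb smul d c e \<in> W" using vs.quot_basis_spans[OF qb] by blast
  have "g * u = g * (u - lincomb smul d c e) + g * lincomb smul d c e"
    by (simp add: right_diff_distrib)
  also have "\<dots> = g * (u - lincomb smul d c e) + lincomb smul d c (\<lambda>j. g * e j)"
    by (simp only: mult_lincomb)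
  also have "\<dots> \<in> W"
    by (rule submodule_add[OF W submodule_mult[OF W g c] submodule_lincomb[OF W kill]])
  finally show "g * u \<in> W" .
qed (rule g)

lemma ideal_prod_subset_submodule:
  assumes "I \<subseteq> G" and "submodule U"
  shows "ideal_prod I U \<subseteq> U"
proof
  fix z assume "z \<in> ideal_prod I U"
  then obtain x y and k :: nat where z: "z = (\<Sum>i<k. x i * y i)" "\<forall>i<k. x i \<in> I \<and> y i \<in> U"
    unfolding ideal_prod_mem by blast
  show "z \<in> U" unfolding z(1) using z(2) assms
    by (intro submodule_sum[OF assms(2)] submodule_mult[OF assms(2)]) auto
qed

lemma simple_quot_generated_by_ideal:
  assumes W: "submodule W" and U: "submodule U" and sq: "simple_quot U W"
    and I: "ideal2 G I" and IU: "\<not> ideal_prod I U \<subseteq> W"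
  shows "U \<subseteq> ideal_prod I U + W"
proof -
  let ?Z = "ideal_prod I U + W"
  have IUZ: "ideal_prod I U \<subseteq> ?Z" using submodule_zero[OF W] by (metis add_0_right set_plus_intro subsetI)
  have WZ: "W \<subseteq> ?Z" using zero_in_ideal_prod by (metis add_0 set_plus_intro subsetI)
  have "?Z \<subseteq> U"
    using ideal_prod_subset_submodule[OF ideal2_subset[OF I] U] simple_quot_subset[OF sq]
      submodule_add[OF U] by (auto elim!: set_plus_elim)
  moreover have "?Z \<noteq> W" using IU IUZ by blast
  ultimately have "?Z = U" using simple_quotD[OF sq submodule_set_plus[OF submodule_ideal_prod[OF I] W] WZ] by blast
  then show ?thesis by simp
qed

text \<open>Submodules of \<open>A\<^sup>n\<close>, with \<open>n\<close>-tuples encoded as functions on \<open>nat\<close>.\<close>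

definition tuple_submodule :: "(nat \<Rightarrow> 'a) set \<Rightarrow> bool" where
  "tuple_submodule Y \<longleftrightarrow> (\<lambda>_. 0) \<in> Y \<and> (\<forall>y\<in>Y. \<forall>y'\<in>Y. (\<lambda>j. y j - y' j) \<in> Y) \<and>
     (\<forall>g\<in>G. \<forall>y\<in>Y. (\<lambda>j. g * y j) \<in> Y)"

lemma
  assumes "tuple_submodule Y"
  shows tuple_submodule_zero: "(\<lambda>_. 0) \<in> Y"
    and tuple_submodule_diff: "y \<in> Y \<Longrightarrow> y' \<in> Y \<Longrightarrow> (\<lambda>j. y j - y' j) \<in> Y"
    and tuple_submodule_mult: "g \<in> G \<Longrightarrow> y \<in> Y \<Longrightarrow> (\<lambda>j. g * y j) \<in> Y"
  using assms unfolding tuple_submodule_def by blast+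

lemma tuple_submodule_add:
  assumes Y: "tuple_submodule Y" and "y \<in> Y" "y' \<in> Y"
  shows "(\<lambda>j. y j + y' j) \<in> Y"
  using tuple_submodule_diff[OF Y \<open>y \<in> Y\<close> tuple_submodule_diff[OF Y tuple_submodule_zero[OF Y] \<open>y' \<in> Y\<close>]]
  by simp

lemma tuple_submodule_sum:
  assumes Y: "tuple_submodule Y" and "\<forall>i<(k::nat). x i \<in> G \<and> ys i \<in> Y"
  shows "(\<lambda>j. \<Sum>i<k. x i * ys i j) \<in> Y"
  using assms(2)
proof (induction k)
  case 0
  then show ?case using tuple_submodule_zero[OF Y] by simp
next
  case (Suc k)
  then show ?case
    using tuple_submodule_add[OF Y _ tuple_submodule_mult[OF Y]] by simp
qed

lemma tuple_submodule_restrict: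
  assumes "tuple_submodule Y" and "submodule W"
  shows "tuple_submodule {y\<in>Y. \<forall>j\<in>J. y j \<in> W}"
  using assms submodule_zero submodule_diff submodule_mult unfolding tuple_submodule_def by simp

lemma submodule_coordinates:
  assumes Y: "tuple_submodule Y"
  shows "submodule ((\<lambda>y. y m) ` Y)"
  unfolding submodule_def
proof (intro conjI ballI)
  show "0 \<in> (\<lambda>y. y m) ` Y" using tuple_submodule_zero[OF Y] by force
  show "a + b \<in> (\<lambda>y. y m) ` Y" if "a \<in> (\<lambda>y. y m) ` Y" "b \<in> (\<lambda>y. y m) ` Y" for a b
    using that tuple_submodule_add[OF Y] by force
  show "- a \<in> (\<lambda>y. y m) ` Y" if "a \<in> (\<lambda>y. y m) ` Y" for a
    using that tuple_submodule_diff[OF Y tuple_submodule_zero[OF Y]] by force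
  show "g * a \<in> (\<lambda>y. y m) ` Y" if "g \<in> G" "a \<in> (\<lambda>y. y m) ` Y" for g a
    using that tuple_submodule_mult[OF Y] by force
qed

lemma tuple_submodule_cyclic:
  assumes W: "submodule W"
  shows "tuple_submodule {y. \<exists>g\<in>G. \<forall>j<n. y j - g * e j \<in> W}"
  unfolding tuple_submodule_def
proof (intro conjI ballI; clarsimp)
  show "\<exists>g\<in>G. \<forall>j<n. - (g * e j) \<in> W" using G_zero submodule_zero[OF W] by force
next
  fix g1 g2 y1 y2 assume g: "g1 \<in> G" "\<forall>j<n. y1 j - g1 * e j \<in> W" "g2 \<in> G" "\<forall>j<n. y2 j - g2 * e j \<in> W"
  have "y1 j - y2 j - (g1 - g2) * e j \<in> W" if "j < n" for j
  proof -
    have "y1 j - y2 j - (g1 - g2) * e j = (y1 j - g1 * e j) - (y2 j - g2 * e j)"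
      by (simp add: algebra_simps)
    also have "\<dots> \<in> W" using g that submodule_diff[OF W] by blast
    finally show ?thesis .
  qed
  then show "\<exists>g\<in>G. \<forall>j<n. y1 j - y2 j - g * e j \<in> W" using G_diff[OF g(1,3)] by blast
next
  fix h g y assume h: "h \<in> G" and g: "g \<in> G" "\<forall>j<n. y j - g * e j \<in> W"
  have "h * y j - (h * g) * e j \<in> W" if "j < n" for j
  proof -
    have "h * y j - (h * g) * e j = h * (y j - g * e j)" by (simp add: algebra_simps mult.assoc)
    also have "\<dots> \<in> W" using g that submodule_mult[OF W h] by blast
    finally show ?thesis .
  qed
  then show "\<exists>g'\<in>G. \<forall>j<n. h * y j - g' * e j \<in> W" using G_mult[OF h g(1)] by blast
qed

definition ideal_tuple_prod :: "'a set \<Rightarrow> (nat \<Rightarrow> 'a) set \<Rightarrow> nat \<Rightarrow> 'a set \<Rightarrow> (nat \<Rightarrow> 'a) set" where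
  "ideal_tuple_prod I Y n W =
     {y. \<exists>(k::nat) x ys. (\<forall>i<k. x i \<in> I \<and> ys i \<in> Y) \<and> (\<forall>j<n. y j - (\<Sum>i<k. x i * ys i j) \<in> W)}"

lemma ideal_tuple_prod_add:
  assumes W: "submodule W" and "(\<lambda>j. y j - z j) \<in> ideal_tuple_prod I Y n W"
    and "\<forall>i<(k::nat). x i \<in> I \<and> ys i \<in> Y" and z: "z = (\<lambda>j. \<Sum>i<k. x i * ys i j)"
  shows "y \<in> ideal_tuple_prod I Y n W"
proof -
  obtain x' ys' and k' :: nat where h: "\<forall>i<k'. x' i \<in> I \<and> ys' i \<in> Y"
    "\<forall>j<n. y j - z j - (\<Sum>i<k'. x' i * ys' i j) \<in> W"
    using assms(2) unfolding ideal_tuple_prod_def by blast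
  define x2 where "x2 i = (if i < k' then x' i else x (i - k'))" for i
  define ys2 where "ys2 i = (if i < k' then ys' i else ys (i - k'))" for i
  have "(\<Sum>i<k'+k. x2 i * ys2 i j) = (\<Sum>i<k'. x' i * ys' i j) + z j" for j
    unfolding z x2_def ys2_def
    using sum_lessThan_append_mult[where p=k' and q=k and a=x' and b=x and c="\<lambda>i. ys' i j" and d="\<lambda>i. ys i j"]
    by (simp add: if_distrib[of "\<lambda>f. f j"])
  then have "\<forall>j<n. y j - (\<Sum>i<k'+k. x2 i * ys2 i j) \<in> W"
    using h(2) by (simp add: algebra_simps)
  moreover have "\<forall>i<k'+k. x2 i \<in> I \<and> ys2 i \<in> Y" using h(1) assms(3) unfolding x2_def ys2_def by auto
  ultimately show ?thesis unfolding ideal_tuple_prod_def by blast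
qed

lemma coordinates_simple_dichotomy:
  assumes W: "submodule W" and U: "submodule U" and sq: "simple_quot U W"
    and Y: "tuple_submodule Y" and YU: "\<forall>y\<in>Y. y m \<in> U"
  shows "(\<lambda>y. y m) ` Y + W = W \<or> (\<lambda>y. y m) ` Y + W = U"
proof (rule simple_quotD[OF sq submodule_set_plus[OF submodule_coordinates[OF Y] W]])
  have "0 \<in> (\<lambda>y. y m) ` Y" using tuple_submodule_zero[OF Y] by (metis image_eqI)
  then show "W \<subseteq> (\<lambda>y. y m) ` Y + W" by (auto intro: set_plus_diffI)
  show "(\<lambda>y. y m) ` Y + W \<subseteq> U"
  proof
    fix z assume "z \<in> (\<lambda>y. y m) ` Y + W"
    then obtain y w where "z = y m + w" "y \<in> Y" "w \<in> W" by (auto elim!: set_plus_elim)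
    then show "z \<in> U" using YU simple_quot_subset[OF sq] submodule_add[OF U] by auto
  qed
qed

lemma coordinate_in_ideal_span:
  assumes W: "submodule W" and I: "ideal2 G I" and gen: "U \<subseteq> ideal_prod I U + W"
    and UZ: "U \<subseteq> (\<lambda>y. y m) ` Y + W" and u: "u \<in> U"
  shows "\<exists>(k::nat) x ys. (\<forall>i<k. x i \<in> I \<and> ys i \<in> Y) \<and> u - (\<Sum>i<k. x i * ys i m) \<in> W"
proof -
  obtain s where s: "s \<in> ideal_prod I U" "u - s \<in> W" using gen u by (blast elim: set_plus_diffE)
  then obtain x us and k :: nat where xus: "s = (\<Sum>i<k. x i * us i)" "\<forall>i<k. x i \<in> I \<and> us i \<in> U"
    unfolding ideal_prod_mem by blast
  have "\<exists>y. y \<in> Y \<and> us i - y m \<in> W" if "i < k" for i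
  proof -
    have "us i \<in> (\<lambda>y. y m) ` Y + W" using xus(2) that UZ by blast
    then obtain s' where "s' \<in> (\<lambda>y. y m) ` Y" "us i - s' \<in> W" by (rule set_plus_diffE)
    then show ?thesis by blast
  qed
  then have "\<forall>i\<in>{..<k}. \<exists>y. y \<in> Y \<and> us i - y m \<in> W" by blast
  then obtain ys where ys: "\<forall>i\<in>{..<k}. ys i \<in> Y \<and> us i - ys i m \<in> W" by (rule bchoice[THEN exE])
  have "u - (\<Sum>i<k. x i * ys i m) = (u - s) + (\<Sum>i<k. x i * (us i - ys i m))"
    unfolding xus(1) by (simp add: algebra_simps sum_subtractf)
  also have "\<dots> \<in> W" using s(2) ys xus(2) ideal2_subset[OF I]
    by (intro submodule_add[OF W] submodule_sum[OF W] submodule_mult[OF W]) auto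
  finally show ?thesis using xus(2) ys by blast
qed

text \<open>The coordinates are cleared from the last one down: the \<open>m\<close>-th coordinates of the tuples
  whose later coordinates lie in \<open>W\<close> form, modulo \<open>W\<close>, a submodule of the simple module \<open>U / W\<close>,
  hence \<open>0\<close> or \<open>U / W = I (U / W)\<close>.\<close>

lemma tuple_submodule_ideal_generated:
  assumes W: "submodule W" and U: "submodule U" and sq: "simple_quot U W" and I: "ideal2 G I"
    and gen: "U \<subseteq> ideal_prod I U + W"
    and Y: "tuple_submodule Y" and YU: "\<forall>y\<in>Y. \<forall>j<n. y j \<in> U"
    and y: "y \<in> Y"
  shows "y \<in> ideal_tuple_prod I Y n W"
proof -
  have "\<forall>y\<in>Y. (\<forall>j. m \<le> j \<and> j < n \<longrightarrow> y j \<in> W) \<longrightarrow> y \<in> ideal_tuple_prod I Y n W" if "m \<le> n" for m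
    using that
  proof (induction m)
    case 0
    show ?case unfolding ideal_tuple_prod_def by (auto intro!: exI[of _ 0])
  next
    case (Suc m)
    have IH: "(\<And>j. m \<le> j \<Longrightarrow> j < n \<Longrightarrow> y j \<in> W) \<Longrightarrow> y \<in> ideal_tuple_prod I Y n W" if "y \<in> Y" for y
      using Suc that by auto
    define Ym where "Ym = {y\<in>Y. \<forall>j\<in>{Suc m..<n}. y j \<in> W}"
    have Ym: "tuple_submodule Ym" unfolding Ym_def by (rule tuple_submodule_restrict[OF Y W])
    let ?Z = "(\<lambda>y. y m) ` Ym + W"
    have "\<forall>y\<in>Ym. y m \<in> U" using YU Suc.prems unfolding Ym_def by auto
    then have Z: "?Z = W \<or> ?Z = U" by (rule coordinates_simple_dichotomy[OF W U sq Ym])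
    have in_Z: "y m \<in> ?Z" if "y \<in> Ym" for y
      using that submodule_zero[OF W] by (intro set_plus_diffI[of "y m"]) auto
    show ?case
    proof (intro ballI impI)
      fix y assume yY: "y \<in> Y" and yW: "\<forall>j. Suc m \<le> j \<and> j < n \<longrightarrow> y j \<in> W"
      have yYm: "y \<in> Ym" unfolding Ym_def using yY yW by simp
      show "y \<in> ideal_tuple_prod I Y n W"
      proof (cases "?Z = W")
        case True
        then have ym: "y m \<in> W" using in_Z[OF yYm] by simp
        show ?thesis
        proof (rule IH[OF yY])
          fix j assume "m \<le> j" "j < n"
          then show "y j \<in> W" using yW ym by (cases "j = m") auto
        qed
      next
        case False
        then have UZ: "U \<subseteq> ?Z" using Z by blast
        have "y m \<in> U" using YU yY Suc.prems by auto
        then obtain x ys and k :: nat where xys: "\<forall>i<k. x i \<in> I \<and> ys i \<in> Ym"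
            "y m - (\<Sum>i<k. x i * ys i m) \<in> W"
          using coordinate_in_ideal_span[OF W I gen UZ] by blast
        define z where "z = (\<lambda>j. \<Sum>i<k. x i * ys i j)"
        have zYm: "z \<in> Ym" unfolding z_def using xys(1) ideal2_subset[OF I] by (intro tuple_submodule_sum[OF Ym]) auto
        have yzm: "y m - z m \<in> W" using xys(2) unfolding z_def by simp
        have "(\<lambda>j. y j - z j) \<in> ideal_tuple_prod I Y n W"
        proof (rule IH)
          show "(\<lambda>j. y j - z j) \<in> Y" using tuple_submodule_diff[OF Y yY] zYm unfolding Ym_def by blast
          fix j assume "m \<le> j" "j < n"
          then show "y j - z j \<in> W"
            using yzm yW zYm submodule_diff[OF W] unfolding Ym_def by (cases "j = m") auto
        qed
        moreover have "\<forall>i<k. x i \<in> I \<and> ys i \<in> Y" using xys(1) unfolding Ym_def by auto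
        ultimately show ?thesis by (rule ideal_tuple_prod_add[OF W _ _ z_def])
      qed
    qed
  qed
  from this[of n] show ?thesis using y by auto
qed

lemma ideal_acts_as_identity:
  fixes e :: "nat \<Rightarrow> 'a"
  assumes W: "submodule W" and U: "submodule U" and sq: "simple_quot U W"
    and I: "ideal2 G I" and IU: "\<not> ideal_prod I U \<subseteq> W" and e: "\<And>j. j < n \<Longrightarrow> e j \<in> U"
  shows "\<exists>X\<in>I. \<forall>j<n. e j - X * e j \<in> W"
proof -
  define Y where "Y = {y. \<exists>g\<in>G. \<forall>j<n. y j - g * e j \<in> W}"
  have Y: "tuple_submodule Y" unfolding Y_def by (rule tuple_submodule_cyclic[OF W])
  have "y j \<in> U" if y: "y \<in> Y" and j: "j < n" for y j
  proof -
    obtain g where g: "g \<in> G" "y j - g * e j \<in> W" using y j unfolding Y_def by blast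
    have "(y j - g * e j) + g * e j \<in> U"
      using g simple_quot_subset[OF sq] submodule_mult[OF U g(1) e[OF j]] submodule_add[OF U] by blast
    then show ?thesis by simp
  qed
  then have YU: "\<forall>y\<in>Y. \<forall>j<n. y j \<in> U" by blast
  have "e \<in> Y" unfolding Y_def using G_one submodule_zero[OF W] by (intro CollectI bexI[of _ 1]) simp_all
  then have "e \<in> ideal_tuple_prod I Y n W"
    by (rule tuple_submodule_ideal_generated[OF W U sq I simple_quot_generated_by_ideal[OF W U sq I IU] Y YU])
  then obtain x ys and k :: nat where h: "\<forall>i<k. x i \<in> I \<and> ys i \<in> Y"
    "\<forall>j<n. e j - (\<Sum>i<k. x i * ys i j) \<in> W"
    unfolding ideal_tuple_prod_def by blast
  have "\<forall>i\<in>{..<k}. \<exists>g. g \<in> G \<and> (\<forall>j<n. ys i j - g * e j \<in> W)" using h(1) unfolding Y_def by blast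
  then obtain gs where gs: "\<And>i. i < k \<Longrightarrow> gs i \<in> G \<and> (\<forall>j<n. ys i j - gs i * e j \<in> W)"
    using bchoice[of "{..<k}"] by (metis lessThan_iff)
  define X where "X = (\<Sum>i<k. x i * gs i)"
  have "X \<in> I" unfolding X_def using h(1) gs
    by (intro ideal2_sum[OF I] ideal2_mult_right[OF I]) auto
  moreover have "e j - X * e j \<in> W" if j: "j < n" for j
  proof -
    have "e j - X * e j = (e j - (\<Sum>i<k. x i * ys i j)) + (\<Sum>i<k. x i * (ys i j - gs i * e j))"
      unfolding X_def by (simp add: algebra_simps sum_subtractf sum_distrib_right mult.assoc)
    also have "\<dots> \<in> W" using h gs j ideal2_subset[OF I]
      by (intro submodule_add[OF W] submodule_sum[OF W] submodule_mult[OF W]) auto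
    finally show ?thesis .
  qed
  ultimately show ?thesis by blast
qed

lemma ann_maximal:
  assumes W: "submodule W" and U: "submodule U" and sq: "simple_quot U W"
    and qb: "quot_basis smul U W n e"
    and I: "ideal2 G I" and sub: "ann U W \<subseteq> I" and ne: "I \<noteq> ann U W"
  shows "I = G"
proof (rule ccontr)
  assume IG: "I \<noteq> G"
  obtain x0 where x0: "x0 \<in> I" "x0 \<notin> ann U W" using sub ne by blast
  then obtain u0 where "u0 \<in> U" "x0 * u0 \<notin> W" using ideal2_subset[OF I] unfolding ann_def by blast
  then have "\<not> ideal_prod I U \<subseteq> W" using mult_in_ideal_prod[OF x0(1)] by blast
  then obtain X where X: "X \<in> I" "\<forall>j<n. e j - X * e j \<in> W"
    using ideal_acts_as_identity[OF W U sq I] vs.quot_basis_in[OF qb] by blast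
  have XG: "X \<in> G" using ideal2_subset[OF I] X(1) by blast
  have "1 - X \<in> ann U W"
    using ann_if_kills_quot_basis[OF W qb G_diff[OF G_one XG]] X(2) by (simp add: algebra_simps)
  then have "(1 - X) + X \<in> I" using sub ideal2_add[OF I _ X(1)] by blast
  then show False using one_notin_ideal2[OF I IG] by simp
qed

lemma findim_quot_step:
  assumes W: "submodule W" and K: "vs.subspace K" "K \<subseteq> G"
    and E: "finite E" "E \<subseteq> G" "G \<subseteq> vs.span E + K"
    and v: "(\<lambda>g. g * v) ` K \<subseteq> vs.span F + W" and F: "finite F"
  shows "\<exists>E'. finite E' \<and> E' \<subseteq> G \<and> G \<subseteq> vs.span E' + {g\<in>K. g * v \<in> W}"
proof -
  have "\<exists>E'. finite E' \<and> E' \<subseteq> K \<and> (\<forall>x\<in>K. \<exists>y\<in>vs.span E'. (x - y) * v \<in> W)"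
    using v by (intro vs.finite_codim_preimage[OF K(1) submodule_subspace[OF W] F])
      (auto simp: distrib_right smul_mult_left)
  then obtain E' where E': "finite E'" "E' \<subseteq> K" "\<forall>x\<in>K. \<exists>y\<in>vs.span E'. (x - y) * v \<in> W"
    by blast
  have "g \<in> vs.span (E \<union> E') + {g\<in>K. g * v \<in> W}" if g: "g \<in> G" for g
  proof -
    obtain y1 where y1: "y1 \<in> vs.span E" "g - y1 \<in> K" using E(3) g by (blast elim: set_plus_diffE)
    obtain y2 where y2: "y2 \<in> vs.span E'" "(g - y1 - y2) * v \<in> W" using E'(3) y1(2) by blast
    have "y2 \<in> K" using vs.span_minimal[OF E'(2) K(1)] y2(1) by blast
    then have "g - (y1 + y2) \<in> {g\<in>K. g * v \<in> W}"
      using vs.subspace_diff[OF K(1) y1(2)] y2(2) by (simp add: diff_diff_eq)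
    moreover have "y1 + y2 \<in> vs.span (E \<union> E')"
      using y1(1) y2(1) vs.span_mono[of E "E \<union> E'"] vs.span_mono[of E' "E \<union> E'"] vs.span_add by blast
    ultimately show ?thesis by (rule set_plus_diffI[rotated])
  qed
  moreover have "E \<union> E' \<subseteq> G" using E(2) E'(2) K(2) by blast
  ultimately show ?thesis using E(1) E'(1) by (intro exI[of _ "E \<union> E'"]) auto
qed

lemma ann_findim_quot:
  assumes W: "submodule W" and U: "submodule U" and qb: "quot_basis smul U W n e"
    and sp: "U \<subseteq> vs.span F + W" and F: "finite F"
  shows "findim_quot smul G (ann U W)"
proof -
  define K where "K j = {g\<in>G. \<forall>i<j. g * e i \<in> W}" for j
  have K: "vs.subspace (K j)" for j
    unfolding vs.subspace_def
  proof (intro conjI ballI allI)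
    show "0 \<in> K j" unfolding K_def using G_zero submodule_zero[OF W] by simp
  next
    fix x y assume "x \<in> K j" "y \<in> K j"
    then show "x + y \<in> K j"
      unfolding K_def using G_add submodule_add[OF W] by (simp add: distrib_right)
  next
    fix c x assume "x \<in> K j"
    then show "smul c x \<in> K j"
      unfolding K_def using G_smul submodule_smul[OF W] by (simp add: smul_mult_left[symmetric])
  qed
  have "\<exists>E. finite E \<and> E \<subseteq> G \<and> G \<subseteq> vs.span E + K j" if "j \<le> n" for j
    using that
  proof (induction j)
    case 0
    have "G \<subseteq> vs.span {} + K 0" unfolding K_def by (auto intro: set_plus_diffI[of 0])
    then show ?case by blast
  next
    case (Suc j)
    then obtain E where E: "finite E" "E \<subseteq> G" "G \<subseteq> vs.span E + K j" by auto
    have "(\<lambda>g. g * e j) ` K j \<subseteq> vs.span F + W"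
      using sp submodule_mult[OF U _ vs.quot_basis_in[OF qb]] Suc.prems unfolding K_def by auto
    moreover have "K (Suc j) = {g\<in>K j. g * e j \<in> W}" unfolding K_def by (auto simp: less_Suc_eq)
    ultimately show ?case using findim_quot_step[OF W K _ E _ F] unfolding K_def by auto
  qed
  then obtain E where E: "finite E" "E \<subseteq> G" "G \<subseteq> vs.span E + K n" by blast
  have "K n \<subseteq> ann U W" using ann_if_kills_quot_basis[OF W qb] unfolding K_def by blast
  then have "G \<subseteq> vs.span E + ann U W" using E(3) set_plus_mono2[OF order_refl, of "K n" "ann U W" "vs.span E"] by blast
  then show ?thesis unfolding findim_quot_iff using E(1,2) by blast
qed

lemma ann_in_cfs:
  assumes W: "submodule W" and U: "submodule U" and sq: "simple_quot U W"
    and sp: "U \<subseteq> vs.span F + W" and F: "finite F"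
  shows "ann U W \<in> cfs smul G"
proof -
  obtain n e where qb: "quot_basis smul U W n e"
    using quot_basis_exists_finite[OF W U simple_quot_subset[OF sq] sp F] by blast
  have "ann U W \<noteq> G"
  proof
    assume "ann U W = G"
    then have "1 \<in> ann U W" using G_one by simp
    then have "U \<subseteq> W" unfolding ann_def by auto
    then show False using simple_quot_subset[OF sq] simple_quot_neq[OF sq] by blast
  qed
  then show ?thesis
    unfolding cfs_def
    using ideal2_ann[OF U W] ann_findim_quot[OF W U qb sp F] ann_maximal[OF W U sq qb] by blast
qed

definition rep_matrix :: "'a set \<Rightarrow> nat \<Rightarrow> (nat \<Rightarrow> 'a) \<Rightarrow> 'a \<Rightarrow> nat \<Rightarrow> nat \<Rightarrow> 'k" where
  "rep_matrix W d e g i j = coord smul W d e (g * e j) i"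

lemma rep_matrix_spec:
  assumes qb: "quot_basis smul U W d e" and U: "submodule U" and g: "g \<in> G" and j: "j < d"
  shows "g * e j - lincomb smul d (\<lambda>i. rep_matrix W d e g i j) e \<in> W"
  using vs.coord_spec[OF qb submodule_mult[OF U g vs.quot_basis_in[OF qb j]]]
  unfolding rep_matrix_def by blast

lemma rep_matrix_unique:
  assumes W: "submodule W" and U: "submodule U" and qb: "quot_basis smul U W d e"
    and g: "g \<in> G" and j: "j < d" and c: "g * e j - lincomb smul d c e \<in> W" and i: "i < d"
  shows "rep_matrix W d e g i j = c i"
  unfolding rep_matrix_def
  by (rule vs.coord_unique[OF submodule_subspace[OF W] qb submodule_mult[OF U g vs.quot_basis_in[OF qb j]] c i])

lemma rep_rep_matrix:
  assumes W: "submodule W" and U: "submodule U" and qb: "quot_basis smul U W d e"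
  shows "rep smul G d (rep_matrix W d e)"
  unfolding rep_def
proof (intro conjI allI ballI impI)
  fix i j assume i: "i < d" and j: "j < d"
  have "1 * e j - lincomb smul d (\<lambda>l. if l = j then 1 else 0) e \<in> W"
    using vs.lincomb_unit[OF j] submodule_zero[OF W] by simp
  then show "rep_matrix W d e 1 i j = (if i = j then 1 else 0)"
    using rep_matrix_unique[OF W U qb G_one j _ i] by auto
next
  fix x y i j assume x: "x \<in> G" and y: "y \<in> G" and i: "i < d" and j: "j < d"
  let ?rx = "\<lambda>i l. rep_matrix W d e x i l" and ?ry = "\<lambda>i l. rep_matrix W d e y i l"
  have sx: "\<And>l. l < d \<Longrightarrow> x * e l - lincomb smul d (\<lambda>i. ?rx i l) e \<in> W"
    using rep_matrix_spec[OF qb U x] by blast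
  have sy: "y * e j - lincomb smul d (\<lambda>i. ?ry i j) e \<in> W"
    using rep_matrix_spec[OF qb U y j] .
  have "(x + y) * e j - lincomb smul d (\<lambda>i. ?rx i j + ?ry i j) e
      = (x * e j - lincomb smul d (\<lambda>i. ?rx i j) e) + (y * e j - lincomb smul d (\<lambda>i. ?ry i j) e)"
    unfolding vs.lincomb_add_coeffs by (simp add: algebra_simps)
  also have "\<dots> \<in> W" using submodule_add[OF W sx[OF j] sy] .
  finally show "rep_matrix W d e (x + y) i j = rep_matrix W d e x i j + rep_matrix W d e y i j"
    using rep_matrix_unique[OF W U qb G_add[OF x y] j _ i] by simp
  define b where "b l = ?ry l j" for l
  have "lincomb smul d (\<lambda>i. \<Sum>l<d. ?rx i l * ?ry l j) e = lincomb smul d b (\<lambda>l. lincomb smul d (\<lambda>i. ?rx i l) e)"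
    unfolding b_def by (rule vs.lincomb_lincomb[symmetric])
  then have "(x * y) * e j - lincomb smul d (\<lambda>i. \<Sum>l<d. ?rx i l * ?ry l j) e
     = x * (y * e j - lincomb smul d b e) + lincomb smul d b (\<lambda>l. x * e l - lincomb smul d (\<lambda>i. ?rx i l) e)"
    unfolding vs.lincomb_diff_vectors mult_lincomb[symmetric] by (simp add: algebra_simps mult.assoc)
  also have "\<dots> \<in> W"
    by (rule submodule_add[OF W submodule_mult[OF W x sy[folded b_def]] submodule_lincomb[OF W sx]])
  finally show "rep_matrix W d e (x * y) i j = (\<Sum>l<d. rep_matrix W d e x i l * rep_matrix W d e y l j)"
    using rep_matrix_unique[OF W U qb G_mult[OF x y] j _ i] by simp
next
  fix c x i j assume x: "x \<in> G" and i: "i < d" and j: "j < d"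
  have "smul c x * e j - lincomb smul d (\<lambda>i. c * rep_matrix W d e x i j) e
      = smul c (x * e j - lincomb smul d (\<lambda>i. rep_matrix W d e x i j) e)"
    by (simp add: smul_mult_left vs.lincomb_scale vs.scale_right_diff_distrib)
  also have "\<dots> \<in> W" using submodule_smul[OF W rep_matrix_spec[OF qb U x j]] .
  finally show "rep_matrix W d e (smul c x) i j = c * rep_matrix W d e x i j"
    using rep_matrix_unique[OF W U qb G_smul[OF x] j _ i] by simp
qed

lemma coord_mult:
  assumes W: "submodule W" and U: "submodule U" and qb: "quot_basis smul U W d e"
    and g: "g \<in> G" and u: "u \<in> U"
  shows "coord smul W d e (g * u) = mapply d (rep_matrix W d e g) (coord smul W d e u)"
proof (rule vs.coord_eq[OF submodule_subspace[OF W] qb submodule_mult[OF U g u]])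
  let ?c = "coord smul W d e u" and ?r = "rep_matrix W d e g"
  have su: "u - lincomb smul d ?c e \<in> W" using vs.coord_spec[OF qb u] by blast
  have sg: "\<And>l. l < d \<Longrightarrow> g * e l - lincomb smul d (\<lambda>i. ?r i l) e \<in> W"
    using rep_matrix_spec[OF qb U g] by blast
  have "lincomb smul d (mapply d ?r ?c) e = lincomb smul d ?c (\<lambda>l. lincomb smul d (\<lambda>i. ?r i l) e)"
    unfolding vs.lincomb_lincomb mapply_def by (rule vs.lincomb_cong) auto
  then have "g * u - lincomb smul d (mapply d ?r ?c) e
      = g * (u - lincomb smul d ?c e) + lincomb smul d ?c (\<lambda>l. g * e l - lincomb smul d (\<lambda>i. ?r i l) e)"
    unfolding vs.lincomb_diff_vectors mult_lincomb[symmetric] by (simp add: algebra_simps)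
  also have "\<dots> \<in> W"
    by (rule submodule_add[OF W submodule_mult[OF W g su] submodule_lincomb[OF W sg]])
  finally show "g * u - lincomb smul d (mapply d ?r ?c) e \<in> W" .
qed (simp add: mapply_def)

lemma simple_rep_rep_matrix:
  assumes W: "submodule W" and U: "submodule U" and sq: "simple_quot U W" and qb: "quot_basis smul U W d e"
  shows "simple_rep smul G d (rep_matrix W d e)"
  unfolding simple_rep_def
proof (intro conjI allI impI)
  have WU: "W \<subseteq> U" using simple_quot_subset[OF sq] .
  have WW: "vs.subspace W" and UU: "vs.subspace U" using W U by (simp_all add: submodule_subspace)
  show "rep smul G d (rep_matrix W d e)" by (rule rep_rep_matrix[OF W U qb])
  show "0 < d"
  proof (rule ccontr)
    assume "\<not> 0 < d"
    then have "U \<subseteq> W" using vs.quot_basis_spans[OF qb] by (force simp: lincomb_def)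
    then show False using WU simple_quot_neq[OF sq] by blast
  qed
  fix V assume V: "V \<subseteq> vecs d \<and> (\<lambda>_. 0) \<in> V \<and> (\<forall>u\<in>V. \<forall>v\<in>V. (\<lambda>i. u i + v i) \<in> V)
      \<and> (\<forall>c. \<forall>u\<in>V. (\<lambda>i. c * u i) \<in> V) \<and> (\<forall>g\<in>G. \<forall>u\<in>V. mapply d (rep_matrix W d e g) u \<in> V)"
  define Z where "Z = {u\<in>U. coord smul W d e u \<in> V}"
  have "submodule Z" unfolding submodule_def
  proof (intro conjI ballI)
    show "0 \<in> Z"
      unfolding Z_def using vs.coord_zero_mod[OF WW qb WU submodule_zero[OF W]] submodule_zero[OF U] V by simp
    show "x + y \<in> Z" if "x \<in> Z" "y \<in> Z" for x y
      using that vs.coord_add[OF WW UU qb] submodule_add[OF U] V unfolding Z_def by simp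
    show "- x \<in> Z" if "x \<in> Z" for x
    proof -
      have "(\<lambda>i. (- 1) * coord smul W d e x i) \<in> V" using that V unfolding Z_def by blast
      then show ?thesis
        using that vs.coord_scale[OF WW UU qb, of x "- 1"] submodule_uminus[OF U] unfolding Z_def by simp
    qed
    show "g * x \<in> Z" if "g \<in> G" "x \<in> Z" for g x
      using that coord_mult[OF W U qb] submodule_mult[OF U] V unfolding Z_def by simp
  qed
  moreover have "W \<subseteq> Z" unfolding Z_def using vs.coord_zero_mod[OF WW qb WU] WU V by auto
  moreover have "Z \<subseteq> U" unfolding Z_def by auto
  ultimately have "Z = W \<or> Z = U" by (rule simple_quotD[OF sq])
  moreover have inZ: "lincomb smul d v e \<in> Z \<longleftrightarrow> v \<in> V" if "v \<in> vecs d" for v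
    using that vs.lincomb_quot_basis_in[OF UU qb] vs.coord_lincomb[OF WW UU qb] unfolding Z_def vecs_def by auto
  moreover have "v = (\<lambda>_. 0)" if "v \<in> vecs d" "lincomb smul d v e \<in> W" for v
  proof -
    have "v = coord smul W d e (lincomb smul d v e)"
      using that(1) vs.coord_lincomb[OF WW UU qb] unfolding vecs_def by simp
    also have "\<dots> = (\<lambda>_. 0)" using vs.coord_zero_mod[OF WW qb WU that(2)] .
    finally show ?thesis .
  qed
  moreover have "lincomb smul d v e \<in> U" for v using vs.lincomb_quot_basis_in[OF UU qb] .
  ultimately have "V \<subseteq> {\<lambda>_. 0} \<or> vecs d \<subseteq> V" using V by blast
  then show "V = {\<lambda>_. 0} \<or> V = vecs d" using V by blast
qed

lemma simple_quot_rep_rep_matrix: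
  assumes W: "submodule W" and U: "submodule U" and sq: "simple_quot U W" and qb: "quot_basis smul U W d e"
  shows "simple_quot_rep smul G (ann U W) d (rep_matrix W d e)"
  unfolding simple_quot_rep_def
proof (intro conjI ballI allI impI)
  show "simple_rep smul G d (rep_matrix W d e)" by (rule simple_rep_rep_matrix[OF assms])
  fix x i j assume x: "x \<in> ann U W" and "i < d" "j < d"
  then have "x * e j \<in> W" using vs.quot_basis_in[OF qb] unfolding ann_def by blast
  then show "rep_matrix W d e x i j = 0"
    unfolding rep_matrix_def
    using vs.coord_zero_mod[OF submodule_subspace[OF W] qb simple_quot_subset[OF sq]] by simp
qed

section \<open>Splitting extensions of simple subquotients\<close>

definition quot_complement :: "'a set \<Rightarrow> 'a set \<Rightarrow> 'a set \<Rightarrow> 'a set \<Rightarrow> bool" where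
  "quot_complement W U X Y \<longleftrightarrow> submodule Y \<and> W \<subseteq> Y \<and> Y \<subseteq> X \<and> Y \<inter> U \<subseteq> W \<and> X \<subseteq> Y + U"

lemma rep_matrix_append_blocks:
  assumes W: "submodule W" and U: "submodule U" and X: "submodule X" and WU: "W \<subseteq> U" and UX: "U \<subseteq> X"
    and qT: "quot_basis smul U W p t" and qS: "quot_basis smul X U q s" and g: "g \<in> G"
  defines "ee \<equiv> \<lambda>i. if i < p then t i else s (i - p)"
  shows "\<forall>i<p. \<forall>j<p. rep_matrix W (p + q) ee g i j = rep_matrix W p t g i j"
    and "\<forall>i<q. \<forall>j<p. rep_matrix W (p + q) ee g (p + i) j = 0"
    and "\<forall>i<q. \<forall>j<q. rep_matrix W (p + q) ee g (p + i) (p + j) = rep_matrix U q s g i j"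
proof -
  have qE: "quot_basis smul X W (p + q) ee" unfolding ee_def
    by (rule vs.quot_basis_append[OF submodule_subspace[OF W] submodule_subspace[OF U] WU UX qT qS])
  have col_T: "rep_matrix W (p + q) ee g i j = (if i < p then rep_matrix W p t g i j else 0)"
    if i: "i < p + q" and j: "j < p" for i j
  proof (rule rep_matrix_unique[OF W X qE g _ _ i])
    show "j < p + q" using j by simp
    have "lincomb smul (p + q) (\<lambda>i. if i < p then rep_matrix W p t g i j else 0) ee
        = lincomb smul p (\<lambda>i. rep_matrix W p t g i j) t"
      unfolding ee_def vs.lincomb_append by (simp add: vs.lincomb_zero_coeffs cong: vs.lincomb_cong)
    then show "g * ee j - lincomb smul (p + q) (\<lambda>i. if i < p then rep_matrix W p t g i j else 0) ee \<in> W"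
      using rep_matrix_spec[OF qT U g j] j unfolding ee_def by simp
  qed
  show "\<forall>i<p. \<forall>j<p. rep_matrix W (p + q) ee g i j = rep_matrix W p t g i j"
    using col_T by simp
  show "\<forall>i<q. \<forall>j<p. rep_matrix W (p + q) ee g (p + i) j = 0"
    using col_T by simp
  show "\<forall>i<q. \<forall>j<q. rep_matrix W (p + q) ee g (p + i) (p + j) = rep_matrix U q s g i j"
  proof (intro allI impI)
    fix i j assume i: "i < q" and j: "j < q"
    have "g * s j - lincomb smul q (\<lambda>l. rep_matrix U q s g l j) s \<in> U"
      by (rule rep_matrix_spec[OF qS X g j])
    then obtain c' where c': "(g * s j - lincomb smul q (\<lambda>l. rep_matrix U q s g l j) s) - lincomb smul p c' t \<in> W"
      using vs.quot_basis_spans[OF qT] by blast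
    define c where "c l = (if l < p then c' l else rep_matrix U q s g (l - p) j)" for l
    have "lincomb smul (p + q) c ee = lincomb smul p c' t + lincomb smul q (\<lambda>l. rep_matrix U q s g l j) s"
      unfolding c_def ee_def vs.lincomb_append by (simp cong: vs.lincomb_cong)
    then have "g * ee (p + j) - lincomb smul (p + q) c ee \<in> W"
      using c' unfolding ee_def by (simp add: algebra_simps)
    then have "rep_matrix W (p + q) ee g (p + i) (p + j) = c (p + i)"
      using rep_matrix_unique[OF W X qE g] i j by simp
    then show "rep_matrix W (p + q) ee g (p + i) (p + j) = rep_matrix U q s g i j" unfolding c_def by simp
  qed
qed

lemma submodule_span_mod_invariant:
  assumes W: "submodule W"
    and invariant: "\<And>g j. g \<in> G \<Longrightarrow> j < q \<Longrightarrow> g * s j - lincomb smul q (\<lambda>l. \<rho> g l j) s \<in> W"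
  shows "submodule {y. \<exists>c. y - lincomb smul q c s \<in> W}" (is "submodule ?Y")
  unfolding submodule_def
proof (intro conjI ballI)
  show "0 \<in> ?Y" using submodule_zero[OF W]
    by (auto intro!: exI[of _ "\<lambda>_. 0"] simp: vs.lincomb_zero_coeffs)
next
  fix x y assume "x \<in> ?Y" "y \<in> ?Y"
  then obtain a b where a: "x - lincomb smul q a s \<in> W" and b: "y - lincomb smul q b s \<in> W"
    by blast
  have "x + y - lincomb smul q (\<lambda>j. a j + b j) s = (x - lincomb smul q a s) + (y - lincomb smul q b s)"
    unfolding vs.lincomb_add_coeffs by (simp add: algebra_simps)
  also have "\<dots> \<in> W" by (rule submodule_add[OF W a b])
  finally show "x + y \<in> ?Y" by blast
next
  fix x assume "x \<in> ?Y"
  then obtain a where a: "x - lincomb smul q a s \<in> W" by blast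
  have "- x - lincomb smul q (\<lambda>j. (- 1) * a j) s = - (x - lincomb smul q a s)"
    unfolding vs.lincomb_scale[symmetric] by simp
  also have "\<dots> \<in> W" by (rule submodule_uminus[OF W a])
  finally show "- x \<in> ?Y" by blast
next
  fix g x assume g: "g \<in> G" and "x \<in> ?Y"
  then obtain a where a: "x - lincomb smul q a s \<in> W" by blast
  define b where "b l = (\<Sum>j<q. \<rho> g l j * a j)" for l
  have "lincomb smul q b s = lincomb smul q a (\<lambda>j. lincomb smul q (\<lambda>l. \<rho> g l j) s)"
    unfolding b_def by (rule vs.lincomb_lincomb[symmetric])
  then have "g * x - lincomb smul q b s
      = g * (x - lincomb smul q a s) + lincomb smul q a (\<lambda>j. g * s j - lincomb smul q (\<lambda>l. \<rho> g l j) s)"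
    unfolding vs.lincomb_diff_vectors mult_lincomb[symmetric] by (simp add: algebra_simps)
  also have "\<dots> \<in> W"
    by (rule submodule_add[OF W submodule_mult[OF W g a] submodule_lincomb[OF W invariant[OF g]]])
  finally show "g * x \<in> ?Y" by blast
qed

lemma intertwined_columns_invariant:
  assumes W: "submodule W" and X: "submodule X" and qE: "quot_basis smul X W d e"
    and g: "g \<in> G" and j: "j < q"
    and comm: "\<forall>i<d. (\<Sum>l<d. rep_matrix W d e g i l * \<sigma> l j) = (\<Sum>l<q. \<sigma> i l * \<rho> l j)"
  shows "g * lincomb smul d (\<lambda>l. \<sigma> l j) e
    - lincomb smul q (\<lambda>l. \<rho> l j) (\<lambda>j. lincomb smul d (\<lambda>l. \<sigma> l j) e) \<in> W"
proof -
  have "lincomb smul d (\<lambda>l. \<sigma> l j) (\<lambda>l. lincomb smul d (\<lambda>i. rep_matrix W d e g i l) e)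
      = lincomb smul d (\<lambda>i. \<Sum>l<q. \<sigma> i l * \<rho> l j) e"
    unfolding vs.lincomb_lincomb using comm by (intro vs.lincomb_cong) auto
  also have "\<dots> = lincomb smul q (\<lambda>l. \<rho> l j) (\<lambda>j. lincomb smul d (\<lambda>l. \<sigma> l j) e)"
    by (rule vs.lincomb_lincomb[symmetric])
  finally have "g * lincomb smul d (\<lambda>l. \<sigma> l j) e - lincomb smul q (\<lambda>l. \<rho> l j) (\<lambda>j. lincomb smul d (\<lambda>l. \<sigma> l j) e)
      = lincomb smul d (\<lambda>l. \<sigma> l j) (\<lambda>l. g * e l - lincomb smul d (\<lambda>i. rep_matrix W d e g i l) e)"
    unfolding vs.lincomb_diff_vectors mult_lincomb by simp
  also have "\<dots> \<in> W" by (rule submodule_lincomb[OF W rep_matrix_spec[OF qE X g]])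
  finally show ?thesis .
qed

text \<open>The columns of a section \<open>\<sigma>\<close> give the lifts \<open>s' j = \<Sum>\<^sub>l \<sigma> l j \<cdot> ee l\<close> of the basis of
  \<open>X / U\<close>; they span a complement.\<close>

lemma quot_complement_from_section:
  assumes W: "submodule W" and U: "submodule U" and X: "submodule X" and WU: "W \<subseteq> U" and UX: "U \<subseteq> X"
    and qT: "quot_basis smul U W p t" and qS: "quot_basis smul X U q s"
  defines "ee \<equiv> \<lambda>i. if i < p then t i else s (i - p)"
  assumes \<sigma>_unit: "\<forall>i<q. \<forall>j<q. \<sigma> (p + i) j = (if i = j then 1 else 0)"
    and \<sigma>_equivariant: "\<forall>g\<in>G. \<forall>i<p + q. \<forall>j<q.
      (\<Sum>l<p + q. rep_matrix W (p + q) ee g i l * \<sigma> l j) = (\<Sum>l<q. \<sigma> i l * rep_matrix U q s g l j)"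
  shows "\<exists>Y. quot_complement W U X Y"
proof -
  have qE: "quot_basis smul X W (p + q) ee" unfolding ee_def
    by (rule vs.quot_basis_append[OF submodule_subspace[OF W] submodule_subspace[OF U] WU UX qT qS])
  let ?\<rho>S = "rep_matrix U q s"
  define s' where "s' j = lincomb smul (p + q) (\<lambda>l. \<sigma> l j) ee" for j
  have expand: "lincomb smul q c s' = lincomb smul p (\<lambda>i. \<Sum>j<q. \<sigma> i j * c j) t + lincomb smul q c s" for c
    unfolding s'_def ee_def by (rule vs.lincomb_section_columns[OF \<sigma>_unit])
  have s'X: "s' j \<in> X" for j unfolding s'_def by (rule vs.lincomb_quot_basis_in[OF submodule_subspace[OF X] qE])
  have invariant: "g * s' j - lincomb smul q (\<lambda>l. ?\<rho>S g l j) s' \<in> W" if "g \<in> G" "j < q" for g j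
    unfolding s'_def using that \<sigma>_equivariant by (intro intertwined_columns_invariant[OF W X qE]) auto
  have lift: "lincomb smul q a s' - lincomb smul q a s \<in> U" for a
    unfolding expand by (simp add: vs.lincomb_quot_basis_in[OF submodule_subspace[OF U] qT])
  define Y where "Y = {y. \<exists>c. y - lincomb smul q c s' \<in> W}"
  have "submodule Y" unfolding Y_def by (rule submodule_span_mod_invariant[OF W invariant])
  moreover have "W \<subseteq> Y"
    unfolding Y_def by (auto intro!: exI[of _ "\<lambda>_. 0"] simp: vs.lincomb_zero_coeffs)
  moreover have "Y \<subseteq> X"
  proof
    fix y assume "y \<in> Y"
    then obtain a where a: "y - lincomb smul q a s' \<in> W" unfolding Y_def by blast
    have "lincomb smul q a s' \<in> X" using s'X by (intro submodule_lincomb[OF X])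
    moreover have "y - lincomb smul q a s' \<in> X" using a WU UX by blast
    ultimately have "(y - lincomb smul q a s') + lincomb smul q a s' \<in> X" by (intro submodule_add[OF X])
    then show "y \<in> X" by simp
  qed
  moreover have "Y \<inter> U \<subseteq> W"
  proof
    fix y assume y: "y \<in> Y \<inter> U"
    then obtain a where a: "y - lincomb smul q a s' \<in> W" unfolding Y_def by blast
    then have "lincomb smul q a s' \<in> U" using y WU submodule_diff[OF U, of y "y - lincomb smul q a s'"] by auto
    then have "lincomb smul q a s \<in> U" using lift[of a] submodule_diff[OF U] by fastforce
    then have "\<forall>j<q. a j = 0" using vs.quot_basis_independent[OF qS] by blast
    then have "lincomb smul q a s' = 0" by (intro vs.lincomb_zero_coeffs) simp
    then show "y \<in> W" using a by simp
  qed
  moreover have "X \<subseteq> Y + U"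
  proof
    fix x assume x: "x \<in> X"
    obtain a where a: "x - lincomb smul q a s \<in> U" using vs.quot_basis_spans[OF qS x] by blast
    have "x - lincomb smul q a s' = (x - lincomb smul q a s) - (lincomb smul q a s' - lincomb smul q a s)"
      by simp
    also have "\<dots> \<in> U" by (rule submodule_diff[OF U a lift])
    finally have "x - lincomb smul q a s' \<in> U" .
    moreover have "lincomb smul q a s' \<in> Y" unfolding Y_def using submodule_zero[OF W] by (intro CollectI exI[of _ a]) simp
    ultimately show "x \<in> Y + U" by (intro set_plus_diffI)
  qed
  ultimately show ?thesis unfolding quot_complement_def by blast
qed

lemma quot_complement_if_not_ext1_nz:
  assumes W: "submodule W" and U: "submodule U" and X: "submodule X"
    and sqU: "simple_quot U W" and sqX: "simple_quot X U"
    and sp: "X \<subseteq> vs.span F + W" and F: "finite F"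
    and no_ext: "\<not> ext1_nz smul G (ann X U) (ann U W)"
  shows "\<exists>Y. quot_complement W U X Y"
proof -
  have WU: "W \<subseteq> U" and UX: "U \<subseteq> X" using simple_quot_subset[OF sqU] simple_quot_subset[OF sqX] .
  have "U \<subseteq> vs.span F + W" using UX sp by blast
  then obtain p t where qT: "quot_basis smul U W p t" using quot_basis_exists_finite[OF W U WU _ F] by blast
  have "X \<subseteq> vs.span F + U" using sp set_plus_mono2[OF order_refl WU] by blast
  then obtain q s where qS: "quot_basis smul X U q s" using quot_basis_exists_finite[OF U X UX _ F] by blast
  define ee where "ee = (\<lambda>i. if i < p then t i else s (i - p))"
  define \<rho>E where "\<rho>E = rep_matrix W (p + q) ee"
  define \<rho>T where "\<rho>T = rep_matrix W p t"
  define \<rho>S where "\<rho>S = rep_matrix U q s"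
  have qE: "quot_basis smul X W (p + q) ee" unfolding ee_def
    by (rule vs.quot_basis_append[OF submodule_subspace[OF W] submodule_subspace[OF U] WU UX qT qS])
  have repE: "rep smul G (p + q) \<rho>E" unfolding \<rho>E_def by (rule rep_rep_matrix[OF W X qE])
  have blocks: "\<forall>g\<in>G. (\<forall>i<p. \<forall>j<p. \<rho>E g i j = \<rho>T g i j) \<and> (\<forall>i<q. \<forall>j<p. \<rho>E g (p + i) j = 0) \<and>
      (\<forall>i<q. \<forall>j<q. \<rho>E g (p + i) (p + j) = \<rho>S g i j)"
    unfolding \<rho>E_def \<rho>T_def \<rho>S_def ee_def using rep_matrix_append_blocks[OF W U X WU UX qT qS] by blast
  have "\<not> ext_nonsplit smul G p \<rho>T q \<rho>S"
    using no_ext simple_quot_rep_rep_matrix[OF W U sqU qT] simple_quot_rep_rep_matrix[OF U X sqX qS]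
    unfolding ext1_nz_def \<rho>T_def \<rho>S_def by blast
  then have "\<forall>\<rho>. rep smul G (p + q) \<rho> \<and>
      (\<forall>g\<in>G. (\<forall>i<p. \<forall>j<p. \<rho> g i j = \<rho>T g i j) \<and> (\<forall>i<q. \<forall>j<p. \<rho> g (p + i) j = 0) \<and>
        (\<forall>i<q. \<forall>j<q. \<rho> g (p + i) (p + j) = \<rho>S g i j)) \<longrightarrow>
      (\<exists>\<sigma>. (\<forall>i<q. \<forall>j<q. \<sigma> (p + i) j = (if i = j then 1 else 0)) \<and>
        (\<forall>g\<in>G. \<forall>i<p + q. \<forall>j<q. (\<Sum>l<p + q. \<rho> g i l * \<sigma> l j) = (\<Sum>l<q. \<sigma> i l * \<rho>S g l j)))"
    unfolding ext_nonsplit_def by blast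
  from this[rule_format, OF conjI[OF repE blocks]] obtain \<sigma> where
    "\<forall>i<q. \<forall>j<q. \<sigma> (p + i) j = (if i = j then 1 else 0)"
    "\<forall>g\<in>G. \<forall>i<p + q. \<forall>j<q. (\<Sum>l<p + q. \<rho>E g i l * \<sigma> l j) = (\<Sum>l<q. \<sigma> i l * \<rho>S g l j)"
    by blast
  then show ?thesis
    unfolding \<rho>E_def \<rho>S_def ee_def by (rule quot_complement_from_section[OF W U X WU UX qT qS])
qed

lemma quot_complement_decomp:
  assumes "quot_complement W U X Y" and "x \<in> X"
  obtains y where "y \<in> Y" "x - y \<in> U"
  using assms unfolding quot_complement_def by (blast elim: set_plus_diffE)

lemma quot_complement_simple_quot:
  assumes U: "submodule U" and sq: "simple_quot U W" and UX: "U \<subseteq> X"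
    and cY: "quot_complement W U X Y"
  shows "simple_quot X Y"
  unfolding simple_quot_def
proof (intro conjI allI impI)
  have Y: "submodule Y" "W \<subseteq> Y" "Y \<subseteq> X" "Y \<inter> U \<subseteq> W"
    using cY unfolding quot_complement_def by blast+
  have WU: "W \<subseteq> U" using simple_quot_subset[OF sq] .
  show "Y \<subseteq> X" by (fact Y(3))
  show "X \<noteq> Y" using Y(4) UX WU simple_quot_neq[OF sq] by blast
  fix Z assume Z: "submodule Z \<and> Y \<subseteq> Z \<and> Z \<subseteq> X"
  have "W \<subseteq> Z \<inter> U" using Y(2) Z WU by blast
  then have "Z \<inter> U = W \<or> Z \<inter> U = U"
    using simple_quotD[OF sq submodule_Int[OF _ U]] Z by blast
  then show "Z = Y \<or> Z = X"
  proof
    assume e: "Z \<inter> U = W"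
    have "Z \<subseteq> Y"
    proof
      fix z assume z: "z \<in> Z"
      then obtain y where y: "y \<in> Y" "z - y \<in> U" using quot_complement_decomp[OF cY] Z by blast
      then have "z - y \<in> Z" using submodule_diff[of Z z y] Z z by blast
      then have "z - y \<in> Y" using e y(2) Y(2) by blast
      then have "(z - y) + y \<in> Y" using submodule_add[OF Y(1) _ y(1)] by blast
      then show "z \<in> Y" by simp
    qed
    then show ?thesis using Z by blast
  next
    assume e: "Z \<inter> U = U"
    have "X \<subseteq> Z"
    proof
      fix x assume "x \<in> X"
      then obtain y where y: "y \<in> Y" "x - y \<in> U" by (rule quot_complement_decomp[OF cY])
      then have "(x - y) + y \<in> Z" using e Z submodule_add[of Z "x - y" y] by blast
      then show "x \<in> Z" by simp
    qed
    then show ?thesis using Z by blast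
  qed
qed

lemma ann_quot_complement:
  assumes U: "submodule U" and UX: "U \<subseteq> X" and cY: "quot_complement W U X Y"
  shows "ann X Y = ann U W"
proof
  have Y: "submodule Y" "W \<subseteq> Y" "Y \<inter> U \<subseteq> W"
    using cY unfolding quot_complement_def by blast+
  show "ann X Y \<subseteq> ann U W"
    using UX Y(3) submodule_mult[OF U] unfolding ann_def by blast
  show "ann U W \<subseteq> ann X Y"
  proof
    fix g assume g: "g \<in> ann U W"
    then have gG: "g \<in> G" unfolding ann_def by blast
    have "g * x \<in> Y" if "x \<in> X" for x
    proof -
      obtain y where y: "y \<in> Y" "x - y \<in> U" using quot_complement_decomp[OF cY \<open>x \<in> X\<close>] .
      have "g * (x - y) + g * y \<in> Y"
        using g y Y(2) submodule_mult[OF Y(1) gG] submodule_add[OF Y(1)] unfolding ann_def by blast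
      then show ?thesis by (simp add: algebra_simps)
    qed
    then show "g \<in> ann X Y" unfolding ann_def using gG by blast
  qed
qed

lemma quot_complement_trans:
  assumes c1: "quot_complement W U X1 Y1" and c2: "quot_complement Y1 X1 X Y2" and UX1: "U \<subseteq> X1"
  shows "quot_complement W U X Y2"
  unfolding quot_complement_def
proof (intro conjI)
  show "submodule Y2" "Y2 \<subseteq> X" using c2 unfolding quot_complement_def by blast+
  show "W \<subseteq> Y2" "Y2 \<inter> U \<subseteq> W" using c1 c2 UX1 unfolding quot_complement_def by blast+
  show "X \<subseteq> Y2 + U"
  proof
    fix x assume "x \<in> X"
    then obtain y2 where y2: "y2 \<in> Y2" "x - y2 \<in> X1"
      using c2 unfolding quot_complement_def by (blast elim: set_plus_diffE)
    then obtain y1 where y1: "y1 \<in> Y1" "x - y2 - y1 \<in> U"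
      using c1 unfolding quot_complement_def by (blast elim: set_plus_diffE)
    have "y2 + y1 \<in> Y2" using c2 y2(1) y1(1) submodule_add unfolding quot_complement_def by blast
    moreover have "x - (y2 + y1) \<in> U" using y1(2) by (simp add: diff_diff_eq)
    ultimately show "x \<in> Y2 + U" by (rule set_plus_diffI)
  qed
qed

text \<open>Simple subquotients of \<open>X / U\<close> have annihilators in \<open>B\<close>; peel them off one at a time,
  splitting each extension by \<open>U / W\<close> since \<open>Ext\<^sup>1\<close> vanishes between different classes.\<close>

lemma quot_complement_exists:
  assumes F: "finite F" and B: "B \<in> classes" and n: "n \<in> Wset G B"
    and W: "submodule W" and U: "submodule U" and X: "submodule X" and sq: "simple_quot U W"
    and no_ext: "\<forall>M'\<in>B. \<not> ext1_nz smul G M' (ann U W)" and UX: "U \<subseteq> X"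
    and kill: "\<forall>x\<in>n. \<forall>y\<in>X. x * y \<in> U" and sp: "X \<subseteq> vs.span F + W"
  shows "\<exists>Y. quot_complement W U X Y"
  using W U sq no_ext UX kill sp
proof (induction "vs.dim (vs.span F \<inter> X) - vs.dim (vs.span F \<inter> U)" arbitrary: W U rule: less_induct)
  case less
  note W = less.prems(1) and U = less.prems(2) and sq = less.prems(3) and no_ext = less.prems(4)
    and UX = less.prems(5) and kill = less.prems(6) and sp = less.prems(7)
  have WU: "W \<subseteq> U" using simple_quot_subset[OF sq] .
  show ?case
  proof (cases "X \<subseteq> U")
    case True
    have "X \<subseteq> W + U"
    proof
      fix x assume "x \<in> X"
      then show "x \<in> W + U" using True submodule_zero[OF W] by (intro set_plus_diffI[of 0]) auto
    qed
    then have "quot_complement W U X W" unfolding quot_complement_def using W WU UX by blast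
    then show ?thesis by blast
  next
    case False
    have spU: "X \<subseteq> vs.span F + U" using sp set_plus_mono2[OF order_refl WU] by blast
    obtain X1 where X1: "submodule X1" "X1 \<subseteq> X" "simple_quot X1 U"
      using simple_quot_exists[OF U X UX False spU F] by blast
    have UX1: "U \<subseteq> X1" using simple_quot_subset[OF X1(3)] .
    have "ann X1 U \<in> cfs smul G" using ann_in_cfs[OF U X1(1,3) _ F] X1(2) spU by blast
    moreover have "n \<subseteq> ann X1 U"
      using kill X1(2) ideal2_subset[OF ideal2_Wset[OF n classes_subset[OF B]]] unfolding ann_def by blast
    ultimately have "ann X1 U \<in> B" using cfs_supset_Wset_in_class[OF n classes_subset[OF B]] by blast
    then obtain Y1 where Y1: "quot_complement W U X1 Y1"
      using quot_complement_if_not_ext1_nz[OF W U X1(1) sq X1(3) _ F] no_ext X1(2) sp by blast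
    have Y1s: "submodule Y1" "W \<subseteq> Y1" "Y1 \<subseteq> X1" using Y1 unfolding quot_complement_def by blast+
    have sqY1: "simple_quot X1 Y1" using quot_complement_simple_quot[OF U sq UX1 Y1] .
    have annY1: "ann X1 Y1 = ann U W" using ann_quot_complement[OF U UX1 Y1] .
    have "vs.dim (vs.span F \<inter> X) - vs.dim (vs.span F \<inter> X1) < vs.dim (vs.span F \<inter> X) - vs.dim (vs.span F \<inter> U)"
      using vs.dim_span_Int_diff_less[OF submodule_subspace[OF U] submodule_subspace[OF X1(1)] UX1
          simple_quot_neq[OF X1(3), symmetric] X1(2) spU F] .
    moreover have "X \<subseteq> vs.span F + Y1" using sp set_plus_mono2[OF order_refl Y1s(2)] by blast
    moreover have "\<forall>M'\<in>B. \<not> ext1_nz smul G M' (ann X1 Y1)" using no_ext annY1 by simp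
    moreover have "\<forall>x\<in>n. \<forall>y\<in>X. x * y \<in> X1" using kill UX1 by blast
    ultimately obtain Y2 where "quot_complement Y1 X1 X Y2"
      using less.hyps[OF _ Y1s(1) X1(1) sqY1 _ X1(2)] by blast
    then show ?thesis using quot_complement_trans[OF Y1 _ UX1] by blast
  qed
qed

section \<open>Decomposition into blocks\<close>

definition block_decomp :: "'a set \<Rightarrow> 'a set \<Rightarrow> 'a \<Rightarrow> bool" where
  "block_decomp U W u \<longleftrightarrow> (\<exists>C f. finite C \<and> C \<subseteq> classes \<and>
     (\<forall>B\<in>C. f B \<in> U \<and> (\<exists>n\<in>Wset G B. \<forall>x\<in>n. x * f B \<in> W)) \<and> u - (\<Sum>B\<in>C. f B) \<in> W)"

lemma Wset_mult_left:
  assumes I: "I \<in> Wset G B" and B: "B \<subseteq> cfs smul G" and M: "M \<in> B"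
  shows "\<exists>J\<in>Wset G B. J \<subseteq> ideal_prod M I"
  using I
proof (induction rule: Wset.induct)
  case Wnil
  have "ideal_prod G M \<in> Wset G B" by (rule Wset.Wcons[OF Wset.Wnil M])
  moreover have "ideal_prod G M \<subseteq> ideal_prod M G"
  proof
    fix z assume "z \<in> ideal_prod G M"
    then have "z \<in> M" using ideal_prod_subset_right[OF _ cfs_ideal2] B M by blast
    then show "z \<in> ideal_prod M G" using mult_in_ideal_prod[OF _ G_one, of z M] by simp
  qed
  ultimately show ?case by blast
next
  case (Wcons I n)
  obtain J where J: "J \<in> Wset G B" "J \<subseteq> ideal_prod M I" using Wcons.IH by blast
  have "ideal_prod J n \<in> Wset G B" by (rule Wset.Wcons[OF J(1) Wcons(2)])
  moreover have "ideal_prod J n \<subseteq> ideal_prod M (ideal_prod I n)"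
    using ideal_prod_mono[OF J(2) order_refl] ideal_prod_assoc_subset by blast
  ultimately show ?case by blast
qed

lemma block_component_own_class:
  assumes W: "submodule W" and B: "B \<in> classes" and n: "n \<in> Wset G B" and MB: "ann U W \<in> B"
    and kill: "\<forall>x\<in>n. x * f \<in> U"
  shows "\<exists>n'\<in>Wset G B. \<forall>x\<in>n'. x * f \<in> W"
proof -
  obtain J where J: "J \<in> Wset G B" "J \<subseteq> ideal_prod (ann U W) n"
    using Wset_mult_left[OF n classes_subset[OF B] MB] by blast
  have "x * f \<in> W" if x_mem: "x \<in> ideal_prod (ann U W) n" for x
  proof -
    obtain ms ys and k :: nat where x: "x = (\<Sum>i<k. ms i * ys i)" "\<forall>i<k. ms i \<in> ann U W \<and> ys i \<in> n"
      using x_mem unfolding ideal_prod_mem by blast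
    have "x * f = (\<Sum>i<k. ms i * (ys i * f))" unfolding x(1) by (simp add: sum_distrib_right mult.assoc)
    also have "\<dots> \<in> W" using x(2) kill unfolding ann_def by (intro submodule_sum[OF W]) auto
    finally show ?thesis .
  qed
  then show ?thesis using J by blast
qed

lemma block_component_other_class:
  assumes F: "finite F" and W: "submodule W" and U: "submodule U" and U1: "submodule U1"
    and sq: "simple_quot U1 W" and U1U: "U1 \<subseteq> U" and sp: "U \<subseteq> vs.span F + W"
    and B: "B \<in> classes" and n: "n \<in> Wset G B" and kill: "\<forall>x\<in>n. x * f \<in> U1" and f: "f \<in> U"
    and no_ext: "\<forall>M'\<in>B. \<not> ext1_nz smul G M' (ann U1 W)"
  shows "\<exists>y\<in>U. f - y \<in> U1 \<and> (\<forall>x\<in>n. x * y \<in> W)"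
proof -
  define X where "X = (\<lambda>g. g * f) ` G + U1"
  have X: "submodule X" unfolding X_def by (rule submodule_set_plus[OF submodule_cyclic U1])
  have U1X: "U1 \<subseteq> X" unfolding X_def using G_zero by (force intro: set_plus_diffI)
  have fX: "f \<in> X" unfolding X_def using G_one submodule_zero[OF U1] by (force intro: set_plus_diffI)
  have XU: "X \<subseteq> U"
    unfolding X_def using submodule_mult[OF U _ f] U1U submodule_add[OF U] by (auto elim!: set_plus_elim)
  have ni: "ideal2 G n" using ideal2_Wset[OF n classes_subset[OF B]] .
  have killX: "\<forall>x\<in>n. \<forall>y\<in>X. x * y \<in> U1"
  proof (intro ballI)
    fix x y assume x: "x \<in> n" and "y \<in> X"
    then obtain g u where g: "g \<in> G" "u \<in> U1" "y = g * f + u" unfolding X_def by (auto elim!: set_plus_elim)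
    have "x * y = (x * g) * f + x * u" unfolding g(3) by (simp add: algebra_simps mult.assoc)
    moreover have "(x * g) * f \<in> U1" using kill ideal2_mult_right[OF ni g(1) x] by blast
    moreover have "x * u \<in> U1" using submodule_mult[OF U1 _ g(2)] ideal2_subset[OF ni] x by blast
    ultimately show "x * y \<in> U1" using submodule_add[OF U1] by simp
  qed
  obtain Y where Y: "quot_complement W U1 X Y"
    using quot_complement_exists[OF F B n W U1 X sq no_ext U1X killX] XU sp by blast
  obtain y where y: "y \<in> Y" "f - y \<in> U1" using quot_complement_decomp[OF Y fX] .

  have "x * y \<in> W" if x: "x \<in> n" for x
  proof -
    have xG: "x \<in> G" using ideal2_subset[OF ni] x by blast
    have "x * y = x * f - x * (f - y)" by (simp add: algebra_simps)
    moreover have "x * f \<in> U1" "x * (f - y) \<in> U1" using kill x submodule_mult[OF U1 xG y(2)] by blast+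
    ultimately have "x * y \<in> U1" using submodule_diff[OF U1] by simp
    moreover have "x * y \<in> Y" using Y submodule_mult[OF _ xG y(1)] unfolding quot_complement_def by blast
    ultimately show ?thesis using Y unfolding quot_complement_def by blast
  qed
  moreover have "y \<in> U" using Y y(1) XU unfolding quot_complement_def by blast
  ultimately show ?thesis using y(2) by blast
qed

lemma block_component_adjust:
  assumes F: "finite F" and W: "submodule W" and U: "submodule U" and U1: "submodule U1"
    and sq: "simple_quot U1 W" and U1U: "U1 \<subseteq> U" and sp: "U \<subseteq> vs.span F + W"
    and B: "B \<in> classes" and n: "n \<in> Wset G B" and kill: "\<forall>x\<in>n. x * f \<in> U1" and f: "f \<in> U"
  shows "\<exists>y\<in>U. f - y \<in> U1 \<and> (\<exists>n'\<in>Wset G B. \<forall>x\<in>n'. x * y \<in> W)"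
proof (cases "ann U1 W \<in> B")
  case True
  then have "\<exists>n'\<in>Wset G B. \<forall>x\<in>n'. x * f \<in> W"
    using block_component_own_class[OF W B n _ kill] by blast
  then show ?thesis using f submodule_zero[OF U1] by (intro bexI[of _ f]) auto
next
  case False
  have M: "ann U1 W \<in> cfs smul G" using ann_in_cfs[OF W U1 sq _ F] U1U sp by blast
  have "M' \<notin> sim_rel smul G `` {ann U1 W}" if "M' \<in> B" for M'
    using classes_eq[OF B class_in_classes[OF M] that] in_own_class[OF M] False by blast
  then have "\<forall>M'\<in>B. \<not> ext1_nz smul G M' (ann U1 W)"
    using not_ext1_nz_other_class[OF M] classes_subset[OF B] by blast
  then obtain y where "y \<in> U" "f - y \<in> U1" "\<forall>x\<in>n. x * y \<in> W"
    using block_component_other_class[OF F W U U1 sq U1U sp B n kill f] by blast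
  then show ?thesis using n by blast
qed

lemma block_decomp_absorb_residue:
  assumes W: "submodule W" and U: "submodule U" and C: "finite C" "C \<subseteq> classes" and B0: "B0 \<in> classes"
    and g: "\<forall>B\<in>C. g B \<in> U \<and> (\<exists>n\<in>Wset G B. \<forall>x\<in>n. x * g B \<in> W)"
    and M: "M \<in> B0" "ideal2 G M" and r: "r \<in> U" "\<forall>x\<in>M. x * r \<in> W"
    and u: "u - (\<Sum>B\<in>C. g B) - r \<in> W"
  shows "block_decomp U W u"
proof -
  define f where "f B = (if B \<in> C then g B else 0) + (if B = B0 then r else 0)" for B
  have "(\<Sum>B\<in>insert B0 C. if B \<in> C then g B else 0) = (\<Sum>B\<in>C. g B)"
    using C(1) by (cases "B0 \<in> C") (simp_all add: insert_absorb cong: sum.cong)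
  moreover have "(\<Sum>B\<in>insert B0 C. if B = B0 then r else 0) = r"
    using C(1) by (simp add: sum.delta')
  ultimately have sum_f: "(\<Sum>B\<in>insert B0 C. f B) = (\<Sum>B\<in>C. g B) + r"
    unfolding f_def sum.distrib by simp
  have "f B \<in> U \<and> (\<exists>n\<in>Wset G B. \<forall>x\<in>n. x * f B \<in> W)" if B: "B \<in> insert B0 C" for B
  proof (cases "B = B0")
    case True
    define a where "a = (if B0 \<in> C then g B0 else 0)"
    have fB: "f B = a + r" unfolding f_def a_def using True by simp
    have "\<exists>n1\<in>Wset G B0. \<forall>x\<in>n1. x * a \<in> W"
    proof (cases "B0 \<in> C")
      case False
      then show ?thesis using Wset.Wnil submodule_zero[OF W] unfolding a_def by auto
    qed (use g a_def in auto)
    then obtain n1 where n1: "n1 \<in> Wset G B0" "\<forall>x\<in>n1. x * a \<in> W" by blast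
    have n1i: "ideal2 G n1" using ideal2_Wset[OF n1(1) classes_subset[OF B0]] .
    have "x * f B \<in> W" if x: "x \<in> ideal_prod n1 M" for x
    proof -
      have "x \<in> n1" "x \<in> M"
        using x ideal_prod_subset_left[OF n1i ideal2_subset[OF M(2)]] ideal_prod_subset_right[OF ideal2_subset[OF n1i] M(2)]
        by blast+
      then show ?thesis using n1(2) r(2) submodule_add[OF W] unfolding fB by (simp add: distrib_left)
    qed
    moreover have "f B \<in> U" unfolding fB a_def using g r(1) submodule_zero[OF U] submodule_add[OF U] by auto
    moreover have "ideal_prod n1 M \<in> Wset G B" using Wset.Wcons[OF n1(1) M(1)] True by simp
    ultimately show ?thesis by blast
  next
    case False
    then show ?thesis using B g unfolding f_def by simp
  qed
  moreover have "u - (\<Sum>B\<in>insert B0 C. f B) \<in> W" using u unfolding sum_f by (simp add: diff_diff_eq)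
  ultimately show ?thesis unfolding block_decomp_def using C B0 by (intro exI[of _ "insert B0 C"] exI[of _ f]) auto
qed

lemma block_decomp_refine:
  assumes F: "finite F" and W: "submodule W" and U: "submodule U" and U1: "submodule U1"
    and sq: "simple_quot U1 W" and U1U: "U1 \<subseteq> U" and sp: "U \<subseteq> vs.span F + W"
    and decomp: "block_decomp U U1 u"
  shows "block_decomp U W u"
proof -
  obtain C f where C: "finite C" "C \<subseteq> classes"
    and f: "\<forall>B\<in>C. f B \<in> U \<and> (\<exists>n\<in>Wset G B. \<forall>x\<in>n. x * f B \<in> U1)" and uf: "u - (\<Sum>B\<in>C. f B) \<in> U1"
    using decomp unfolding block_decomp_def by blast
  have "\<exists>y\<in>U. f B - y \<in> U1 \<and> (\<exists>n\<in>Wset G B. \<forall>x\<in>n. x * y \<in> W)" if BC: "B \<in> C" for B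
  proof -
    obtain n where n: "n \<in> Wset G B" "\<forall>x\<in>n. x * f B \<in> U1" using f BC by blast
    moreover have "B \<in> classes" "f B \<in> U" using BC C(2) f by auto
    ultimately show ?thesis using block_component_adjust[OF F W U U1 sq U1U sp] by blast
  qed
  then have "\<forall>B\<in>C. \<exists>y. y \<in> U \<and> f B - y \<in> U1 \<and> (\<exists>n\<in>Wset G B. \<forall>x\<in>n. x * y \<in> W)" by blast
  then obtain g where g: "\<forall>B\<in>C. g B \<in> U \<and> f B - g B \<in> U1 \<and> (\<exists>n\<in>Wset G B. \<forall>x\<in>n. x * g B \<in> W)"
    by (rule bchoice[THEN exE])
  have "u - (\<Sum>B\<in>C. g B) = (u - (\<Sum>B\<in>C. f B)) + (\<Sum>B\<in>C. f B - g B)"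
    by (simp add: sum_subtractf)
  also have "\<dots> \<in> U1" using g by (intro submodule_add[OF U1 uf] submodule_sum[OF U1]) simp
  finally have r: "u - (\<Sum>B\<in>C. g B) \<in> U1" .
  have M: "ann U1 W \<in> cfs smul G" using ann_in_cfs[OF W U1 sq _ F] U1U sp by blast
  show ?thesis
  proof (rule block_decomp_absorb_residue[OF W U C class_in_classes[OF M] _ in_own_class[OF M] cfs_ideal2[OF M]])
    show "\<forall>B\<in>C. g B \<in> U \<and> (\<exists>n\<in>Wset G B. \<forall>x\<in>n. x * g B \<in> W)" using g by blast
    show "u - (\<Sum>B\<in>C. g B) \<in> U" using r U1U by blast
    show "\<forall>x\<in>ann U1 W. x * (u - (\<Sum>B\<in>C. g B)) \<in> W" using r unfolding ann_def by blast
  qed (simp add: submodule_zero[OF W])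
qed

lemma block_decomp_exists:
  assumes F: "finite F" and U: "submodule U" and W: "submodule W" and WU: "W \<subseteq> U"
    and sp: "U \<subseteq> vs.span F + W" and u: "u \<in> U"
  shows "block_decomp U W u"
  using W WU sp
proof (induction "vs.dim (vs.span F \<inter> U) - vs.dim (vs.span F \<inter> W)" arbitrary: W rule: less_induct)
  case less
  note W = less.prems(1) and WU = less.prems(2) and sp = less.prems(3)
  show ?case
  proof (cases "U \<subseteq> W")
    case True
    then show ?thesis unfolding block_decomp_def using u by (intro exI[of _ "{}"]) auto
  next
    case False
    obtain U1 where U1: "submodule U1" "U1 \<subseteq> U" "simple_quot U1 W"
      using simple_quot_exists[OF W U WU False sp F] by blast
    have WU1: "W \<subseteq> U1" using simple_quot_subset[OF U1(3)] .
    have "vs.dim (vs.span F \<inter> U) - vs.dim (vs.span F \<inter> U1) < vs.dim (vs.span F \<inter> U) - vs.dim (vs.span F \<inter> W)"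
      using vs.dim_span_Int_diff_less[OF submodule_subspace[OF W] submodule_subspace[OF U1(1)] WU1
          simple_quot_neq[OF U1(3), symmetric] U1(2) sp F] .
    moreover have "U \<subseteq> vs.span F + U1" using sp set_plus_mono2[OF order_refl WU1] by blast
    ultimately have "block_decomp U U1 u" using less.hyps[OF _ U1(1,2)] by blast
    then show ?thesis by (rule block_decomp_refine[OF F W U U1(1,3,2) sp])
  qed
qed

lemma left_ideal_submodule: "left_ideal L \<Longrightarrow> submodule L"
  unfolding left_ideal_def submodule_def by (metis mult_minus1)

lemma killing_ideal_comaximal:
  assumes qn: "quasinoetherian smul G (sim_rel smul G)" and L: "left_ideal L"
    and B0: "B0 \<in> classes" and n0: "n0 \<in> Wset G B0"
    and C: "finite C" "C \<subseteq> classes" "B0 \<notin> C" and f: "\<forall>B\<in>C. f B \<in> vlift G L B"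
  shows "\<exists>J. ideal2 G J \<and> (\<forall>x\<in>J. x * (\<Sum>B\<in>C. f B) \<in> L) \<and> (\<exists>a\<in>J. \<exists>b\<in>n0. a + b = 1)"
  using C f
proof (induction C rule: finite_induct)
  case empty
  have "\<forall>x\<in>G. x * (\<Sum>B\<in>{}. f B) \<in> L" using L unfolding left_ideal_def by simp
  moreover have "1 + 0 = (1 :: 'a)" "0 \<in> n0" using ideal2_zero[OF ideal2_Wset[OF n0 classes_subset[OF B0]]] by simp_all
  ultimately show ?case using ideal2_G G_one by blast
next
  case (insert B' C)
  obtain J where J: "ideal2 G J" "\<forall>x\<in>J. x * (\<Sum>B\<in>C. f B) \<in> L" "\<exists>a\<in>J. \<exists>b\<in>n0. a + b = 1"
    using insert by auto
  have B': "B' \<in> classes" using insert(4) by auto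
  obtain n' where n': "n' \<in> Wset G B'" "\<forall>x\<in>n'. x * f B' \<in> L" using insert(6) unfolding vlift_def by blast
  have n'i: "ideal2 G n'" using ideal2_Wset[OF n'(1) classes_subset[OF B']] .
  have n0i: "ideal2 G n0" using ideal2_Wset[OF n0 classes_subset[OF B0]] .
  obtain c d where cd: "c \<in> n'" "d \<in> n0" "c + d = 1"
    using Wset_comaximal[OF qn B' B0 _ n'(1) n0] insert(5) by blast
  obtain a b where ab: "a \<in> J" "b \<in> n0" "a + b = 1" using J(3) by blast
  have "x * (\<Sum>B\<in>insert B' C. f B) \<in> L" if x: "x \<in> J \<inter> n'" for x
  proof -
    have "x * (\<Sum>B\<in>insert B' C. f B) = x * f B' + x * (\<Sum>B\<in>C. f B)"
      using insert(1,2) by (simp add: distrib_left)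
    then show ?thesis using x n'(2) J(2) L unfolding left_ideal_def by simp
  qed
  moreover have "\<exists>a\<in>J \<inter> n'. \<exists>b\<in>n0. a + b = 1"
  proof (intro bexI)
    have "1 = (a + b) * (c + d)" using ab(3) cd(3) by simp
    then show "a * c + (a * d + b * c + b * d) = 1" by (simp add: algebra_simps)
    show "a * c \<in> J \<inter> n'"
      using ideal2_mult_right[OF J(1) _ ab(1)] ideal2_mult_left[OF n'i _ cd(1)]
        ideal2_subset[OF n'i] ideal2_subset[OF J(1)] ab(1) cd(1) by blast
    have aG: "a \<in> G" and bG: "b \<in> G" and cG: "c \<in> G"
      using ideal2_subset[OF J(1)] ideal2_subset[OF n0i] ideal2_subset[OF n'i] ab(1,2) cd(1) by blast+
    show "a * d + b * c + b * d \<in> n0"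
      by (intro ideal2_add[OF n0i] ideal2_mult_left[OF n0i aG cd(2)] ideal2_mult_right[OF n0i cG ab(2)]
          ideal2_mult_left[OF n0i bG cd(2)])
  qed
  ultimately show ?case using ideal2_Int[OF J(1) n'i] by blast
qed

lemma block_components_unique:
  assumes qn: "quasinoetherian smul G (sim_rel smul G)" and L: "left_ideal L"
    and C: "finite C" "C \<subseteq> classes" and f: "\<forall>B\<in>C. f B \<in> vlift G L B" and sum_L: "(\<Sum>B\<in>C. f B) \<in> L"
  shows "\<forall>B\<in>C. f B \<in> L"
proof
  fix B0 assume B0C: "B0 \<in> C"
  then have B0: "B0 \<in> classes" using C by auto
  obtain n0 where n0: "n0 \<in> Wset G B0" "\<forall>x\<in>n0. x * f B0 \<in> L" using f B0C unfolding vlift_def by blast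
  obtain J where J: "\<forall>x\<in>J. x * (\<Sum>B\<in>C - {B0}. f B) \<in> L" "\<exists>a\<in>J. \<exists>b\<in>n0. a + b = 1"
    using killing_ideal_comaximal[OF qn L B0 n0(1), of "C - {B0}" f] C f by blast
  then obtain a b where ab: "a \<in> J" "b \<in> n0" "a + b = 1" by blast
  have "f B0 = (a + b) * f B0" using ab(3) by simp
  also have "\<dots> = a * (\<Sum>B\<in>C. f B) - a * (\<Sum>B\<in>C - {B0}. f B) + b * f B0"
    using C(1) B0C by (simp add: sum.remove algebra_simps)
  also have "\<dots> \<in> L"
    using sum_L J(1) n0(2) ab(1,2) L submodule_diff[OF left_ideal_submodule[OF L]]
    unfolding left_ideal_def by simp
  finally show "f B0 \<in> L" .
qed

lemma mult_in_span_image: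
  assumes S: "finite S" and y: "y \<in> vs.span S"
  shows "f * y \<in> vs.span ((\<lambda>s. f * s) ` S)"
proof -
  obtain k where "y = (\<Sum>s\<in>S. smul (k s) s)" using vs.span_finite[OF S] y by blast
  then have "f * y = (\<Sum>s\<in>S. smul (k s) (f * s))" by (simp add: sum_distrib_left smul_mult_right)
  also have "\<dots> \<in> vs.span ((\<lambda>s. f * s) ` S)" by (intro vs.span_sum vs.span_scale vs.span_base) auto
  finally show ?thesis .
qed

text \<open>Quasicentrality writes \<open>\<Gamma> a\<close> inside \<open>\<Sum>\<^sub>f f \<Gamma>\<close> for finitely many \<open>f\<close>; modulo \<open>A m\<close>
  each \<open>\<Gamma>\<close> may be replaced by a finite dimensional space of representatives of \<open>\<Gamma> / m\<close>.\<close>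

lemma quasicentral_cyclic_span_mod:
  assumes qc: "quasicentral G" and F': "finite F'" "G \<subseteq> vs.span F' + m"
  shows "\<exists>F0. finite F0 \<and> (\<forall>g\<in>G. g * a \<in> vs.span F0 + left_gen m)"
proof -
  have "\<exists>F. finite F \<and> F \<subseteq> bimod G a \<and> bimod G a \<subseteq> {\<Sum>f\<in>F. f * c f | c. \<forall>f\<in>F. c f \<in> G}"
    using qc unfolding quasicentral_def by (rule allE) (rule conjunct2)
  then obtain F where F: "finite F" "bimod G a \<subseteq> {\<Sum>f\<in>F. f * c f | c. \<forall>f\<in>F. c f \<in> G}"
    by blast
  define F0 where "F0 = (\<lambda>(f, f'). f * f') ` (F \<times> F')"
  have "g * a \<in> vs.span F0 + left_gen m" if g: "g \<in> G" for g
  proof -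
    have "g * a \<in> bimod G a" unfolding bimod_def
      using g G_one by (intro CollectI exI[of _ 1] exI[of _ "\<lambda>_. g"] exI[of _ "\<lambda>_. 1"]) simp
    then obtain c where c: "g * a = (\<Sum>f\<in>F. f * c f)" "\<forall>f\<in>F. c f \<in> G" using F(2) by blast
    have "\<forall>f\<in>F. \<exists>s. s \<in> vs.span F' \<and> c f - s \<in> m"
    proof
      fix f assume "f \<in> F"
      then have "c f \<in> vs.span F' + m" using F'(2) c(2) by blast
      then obtain s where "s \<in> vs.span F'" "c f - s \<in> m" by (rule set_plus_diffE)
      then show "\<exists>s. s \<in> vs.span F' \<and> c f - s \<in> m" by blast
    qed
    then obtain s where s: "\<forall>f\<in>F. s f \<in> vs.span F' \<and> c f - s f \<in> m" by (rule bchoice[THEN exE])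
    have "(\<Sum>f\<in>F. f * s f) \<in> vs.span F0"
    proof (rule vs.span_sum)
      fix f assume f: "f \<in> F"
      have "f * s f \<in> vs.span ((\<lambda>s. f * s) ` F')"
        using mult_in_span_image[OF F'(1), of "s f" f] s f by blast
      moreover have "(\<lambda>s. f * s) ` F' \<subseteq> F0" unfolding F0_def using f by auto
      ultimately show "f * s f \<in> vs.span F0" using vs.span_mono by blast
    qed
    moreover have "g * a - (\<Sum>f\<in>F. f * s f) = (\<Sum>f\<in>F. f * (c f - s f))"
      unfolding c(1) by (simp add: right_diff_distrib sum_subtractf)
    moreover have "(\<Sum>f\<in>F. f * (c f - s f)) \<in> left_gen m"
      using s unfolding left_gen_eq_ideal_prod by (intro ideal_prod_sum[OF F(1)] mult_in_ideal_prod) auto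
    ultimately show ?thesis by (intro set_plus_diffI[of "\<Sum>f\<in>F. f * s f"]) simp_all
  qed
  moreover have "finite F0" unfolding F0_def using F(1) F'(1) by simp
  ultimately show ?thesis by blast
qed

lemma cyclic_findim_mod_left_gen:
  assumes qc: "quasicentral G" and fq: "findim_quot smul G m"
  shows "\<exists>F0. finite F0 \<and> (\<lambda>g. g * a) ` G + left_gen m \<subseteq> vs.span F0 + left_gen m"
proof -
  let ?L = "left_gen m"
  obtain F' where "finite F'" "G \<subseteq> vs.span F' + m" using fq unfolding findim_quot_iff by blast
  then obtain F0 where F0: "finite F0" "\<forall>g\<in>G. g * a \<in> vs.span F0 + ?L"
    using quasicentral_cyclic_span_mod[OF qc] by blast
  have "x \<in> vs.span F0 + ?L" if x: "x \<in> (\<lambda>g. g * a) ` G + ?L" for x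
  proof -
    obtain g l where gl: "x = g * a + l" "g \<in> G" "l \<in> ?L" using x by (auto elim!: set_plus_elim)
    obtain y where y: "y \<in> vs.span F0" "g * a - y \<in> ?L" using F0(2) gl(2) by (blast elim: set_plus_diffE)
    have "x - y = (g * a - y) + l" using gl(1) by (simp add: algebra_simps)
    also have "\<dots> \<in> ?L" using y(2) gl(3) left_ideal_left_gen unfolding left_ideal_def by blast
    finally show ?thesis using y(1) by (intro set_plus_diffI)
  qed
  then show ?thesis using F0(1) by blast
qed

theorem HC_block_if_quasinoetherian_quasicentral:
  assumes qn: "quasinoetherian smul G (sim_rel smul G)" and qc: "quasicentral G"
  shows "HC_block smul G (sim_rel smul G)"
  unfolding HC_block_def
proof (intro ballI)
  fix B m assume B: "B \<in> classes" and m: "m \<in> Wset G B"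
  let ?L = "left_gen m"
  have L: "left_ideal ?L" by (rule left_ideal_left_gen)
  have fq: "findim_quot smul G m" using qn B m unfolding quasinoetherian_def by blast
  show "block_quot G classes ?L"
    unfolding block_quot_def
  proof (intro conjI allI impI)
    fix a
    let ?U = "(\<lambda>g. g * a) ` G + ?L"
    obtain F where F: "finite F" "?U \<subseteq> vs.span F + ?L" using cyclic_findim_mod_left_gen[OF qc fq] by blast
    have "?L \<subseteq> ?U" using G_zero by (force intro: set_plus_diffI)
    moreover have "a \<in> ?U" using G_one L unfolding left_ideal_def by (force intro: set_plus_diffI)
    ultimately have "block_decomp ?U ?L a"
      using block_decomp_exists[OF F(1) submodule_set_plus[OF submodule_cyclic] _ _ F(2)]
        left_ideal_submodule[OF L] by blast
    then show "\<exists>C f. finite C \<and> C \<subseteq> classes \<and> (\<forall>B\<in>C. f B \<in> vlift G ?L B) \<and> a - (\<Sum>B\<in>C. f B) \<in> ?L"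
      unfolding block_decomp_def vlift_def by blast
  next
    fix C f assume "finite C \<and> C \<subseteq> classes \<and> (\<forall>B\<in>C. f B \<in> vlift G ?L B) \<and> (\<Sum>B\<in>C. f B) \<in> ?L"
    then show "\<forall>B\<in>C. f B \<in> ?L" using block_components_unique[OF qn L] by blast
  qed
qed

end

theorem mainTheorem12:
  fixes smul :: "'k::field \<Rightarrow> 'a::ring_1 \<Rightarrow> 'a" and G :: "'a set"
  assumes "kalg smul"
    and "subalg smul G"
    and "quasinoetherian smul G (sim_rel smul G)"
    and "quasicentral G"
  shows "HC_block smul G (sim_rel smul G)"
proof -
  interpret subalgebra smul G using assms(1,2) by unfold_locales
  show ?thesis using HC_block_if_quasinoetherian_quasicentral[OF assms(3,4)] .
qed

end
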